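(* Let $\delta=x^{\mathbf d}f(\theta)$ be a homogeneous differential operator of degree $\mathbf d$ with $\mathbf d\neq\mathbf 0$, $-\mathbf d\in S$, $\mathbf d=q\mathbf e$ ($q\in\mathbb Z_{\ge1}$, $\mathbf e$ primitive). Then $\delta$ fixes some nonzero monomial ideal of $R$ if and only if there exists a subset $\mathcal B\subseteq\mathbb N^n$ compatible with $\mathbf d$ such that (1) $\operatorname{val}(\mathbf a)>-\infty$ for all $\mathbf a\in W_{\mathcal B}$; (2) for all $\mathbf a\in V'_{\mathrm{mon}}(f)\cap W_{\mathcal B}$ and $i=0,\dots,q-1$, $\mathbf a-i\mathbf e\in V_{\mathrm{mon}}(f)$; (3) for all $\mathbf a,\mathbf b\in V'_{\mathrm{mon}}(f)\cap W_{\mathcal B}$, $\mathbf a-\mathbf b\notin S-\mathbf e$. In this case $\delta$ fixes the ideal $I=(x^{\mathbf a}\mid\mathbf a\in V'_{\mathrm{mon}}(f)\cap W_{\mathcal B})$, and $\operatorname{Exp} I=\{\mathbf a\in W_{\mathcal B}:\operatorname{pval}(\mathbf a)\ge 0\}$.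
   Context: Standing notation. Fix $d\ge 1$. Let $\sigma\subseteq\mathbb R^d$ be a full-dimensional, strongly convex rational polyhedral cone, so $\sigma^\vee$ is full-dimensional and strongly convex. $S=\sigma^\vee\cap\mathbb Z^d$, $R=\mathbb C[S]$ with monomial basis $x^{\mathbf a}$, $\mathbf a\in S$. $h_1,\dots,h_n$ are the primitive support functions of the facets of $\sigma^\vee$, so $S=\{\mathbf a\in\mathbb Z^d:h_i(\mathbf a)\ge0\ \forall i\}$. $(g,m)!=\prod_{j=0}^m(g-j)$ for $m\ge0$, $=1$ for $m<0$; $H_{\mathbf d}=\prod_i(h_i,h_i(-\mathbf d)-1)!$. For $f$ divisible by $H_{\mathbf d}$, $\delta=x^{\mathbf d}f(\theta)$ acts by $\delta(x^{\mathbf a})=f(\mathbf a)x^{\mathbf a+\mathbf d}$. $\operatorname{Exp} I=\{\mathbf a\in S:x^{\mathbf a}\in I\}$; $I$ is $\delta$-fixed if $\delta(I)=I$. $V_{\mathrm{mon}}(f)=\{\mathbf a\in\mathbb Z^d:f(\mathbf a)=0\}$; $S-\mathbf e=\{\mathbf s-\mathbf e:\mathbf s\in S\}$. For $\mathbf a\in\mathbb Z^d$, $\operatorname{val}(\mathbf a)=\inf\{t\in\mathbb R:\mathbf a+t\mathbf d\in V_{\mathrm{mon}}(f)\}\in\mathbb R\cup\{\pm\infty\}$ ($\inf\emptyset=+\infty$). When $\operatorname{val}(\mathbf a)$ is finite, $\operatorname{pval}(\mathbf a)=\max\{t\in[\operatorname{val}(\mathbf a),\operatorname{val}(\mathbf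 a)+1):\mathbf a+t\mathbf d\in V_{\mathrm{mon}}(f)\}$ and $\operatorname{vpt}(\mathbf a)=\mathbf a+\operatorname{pval}(\mathbf a)\mathbf d$. $V'_{\mathrm{mon}}(f)=\{\operatorname{vpt}(\mathbf a):\mathbf a\in\mathbb Z^d,\ \operatorname{val}(\mathbf a)\text{ finite}\}$. A tuple $\beta\in\mathbb N^n$ is compatible with $\mathbf d$ if for every $i$, $\beta_i=0$ or $h_i(\mathbf d)=0$; $\mathcal B\subseteq\mathbb N^n$ is compatible with $\mathbf d$ if each element is. $W_\beta=\{\mathbf a\in S: h_i(\mathbf a)\ge\beta_i\ \forall i\}$, $W_{\mathcal B}=\bigcup_{\beta\in\mathcal B}W_\beta$. *)

theory Defs
  imports "HOL-Analysis.Analysis" "HOL-Library.Poly_Mapping" "HOL-Library.Extended_Real"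
begin

definition rvec :: "int^'n \<Rightarrow> real^'n" where
  "rvec a = (\<chi> j. real_of_int (a $ j))"

definition primitive_vec :: "int^'n \<Rightarrow> bool" where
  "primitive_vec v \<longleftrightarrow> (\<forall>k::int. (\<forall>j. k dvd v $ j) \<longrightarrow> \<bar>k\<bar> = 1)"

definition rat_poly_cone :: "(real^'n) set \<Rightarrow> bool" where
  "rat_poly_cone \<sigma> \<longleftrightarrow> (\<exists>V :: (int^'n) set. finite V \<and>
      \<sigma> = {x. \<exists>w. (\<forall>v\<in>V. w v \<ge> 0) \<and> x = (\<Sum>v\<in>V. w v *\<^sub>R rvec v)})"

definition strongly_convex :: "(real^'n) set \<Rightarrow> bool" where
  "strongly_convex \<sigma> \<longleftrightarrow> \<sigma> \<inter> uminus ` \<sigma> = {0}"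

definition dual_cone :: "(real^'n) set \<Rightarrow> (real^'n) set" where
  "dual_cone \<sigma> = {u. \<forall>v\<in>\<sigma>. u \<bullet> v \<ge> 0}"

definition semigp :: "(real^'n) set \<Rightarrow> (int^'n) set" where
  "semigp \<sigma> = {a. rvec a \<in> dual_cone \<sigma>}"

definition hint :: "int^'n \<Rightarrow> int^'n \<Rightarrow> int" where
  "hint c a = (\<Sum>j\<in>UNIV. c $ j * a $ j)"

definition hreal :: "int^'n \<Rightarrow> real^'n \<Rightarrow> real" where
  "hreal c u = (\<Sum>j\<in>UNIV. real_of_int (c $ j) * u $ j)"

definition facet_hyp :: "(real^'n) set \<Rightarrow> int^'n \<Rightarrow> (real^'n) set" where
  "facet_hyp \<sigma> c = {u \<in> dual_cone \<sigma>. hreal c u = 0}"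

text \<open>h_0,...,h_{n-1} (coefficient vectors c i) are exactly the primitive support
  functions of the facets of the dual cone, one per facet\<close>
definition facet_functions :: "(real^'n) set \<Rightarrow> nat \<Rightarrow> (nat \<Rightarrow> int^'n) \<Rightarrow> bool" where
  "facet_functions \<sigma> n c \<longleftrightarrow>
     (\<forall>i<n. primitive_vec (c i) \<and> (\<forall>u\<in>dual_cone \<sigma>. hreal (c i) u \<ge> 0)
            \<and> facet_hyp \<sigma> (c i) facet_of dual_cone \<sigma>)
   \<and> (\<forall>F. F facet_of dual_cone \<sigma> \<longrightarrow> (\<exists>i<n. F = facet_hyp \<sigma> (c i)))
   \<and> inj_on (\<lambda>i. facet_hyp \<sigma> (c i)) {..<n}"

type_synonym 'n cpoly = "('n \<Rightarrow>\<^sub>0 nat) \<Rightarrow>\<^sub>0 complex"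

definition peval :: "'n::finite cpoly \<Rightarrow> int^'n \<Rightarrow> complex" where
  "peval f a = (\<Sum>m\<in>Poly_Mapping.keys f. Poly_Mapping.lookup f m * (\<Prod>j\<in>UNIV. (complex_of_int (a $ j)) ^ Poly_Mapping.lookup m j))"

definition pconst :: "complex \<Rightarrow> 'n cpoly" where
  "pconst k = Poly_Mapping.single 0 k"

definition hpoly :: "int^'n \<Rightarrow> 'n::finite cpoly" where
  "hpoly c = (\<Sum>j\<in>UNIV. Poly_Mapping.single (Poly_Mapping.single j 1) (of_int (c $ j)))"

definition ffact :: "'n cpoly \<Rightarrow> int \<Rightarrow> 'n cpoly" where
  "ffact g m = (if m < 0 then 1 else (\<Prod>j\<in>{0..nat m}. g - pconst (of_nat j)))"

definition Hpoly :: "nat \<Rightarrow> (nat \<Rightarrow> int^'n) \<Rightarrow> int^'n \<Rightarrow> 'n::finite cpoly" where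
  "Hpoly n c d = (\<Prod>i<n. ffact (hpoly (c i)) (hint (c i) (- d) - 1))"

type_synonym 'n elt = "(int^'n) \<Rightarrow>\<^sub>0 complex"

definition ringR :: "(real^'n) set \<Rightarrow> 'n elt set" where
  "ringR \<sigma> = {p. Poly_Mapping.keys p \<subseteq> semigp \<sigma>}"

definition monom :: "int^'n \<Rightarrow> 'n elt" where
  "monom a = Poly_Mapping.single a 1"

definition is_ideal :: "(real^'n) set \<Rightarrow> 'n::finite elt set \<Rightarrow> bool" where
  "is_ideal \<sigma> I \<longleftrightarrow> I \<subseteq> ringR \<sigma> \<and> 0 \<in> I \<and> (\<forall>x\<in>I. \<forall>y\<in>I. x + y \<in> I)
      \<and> (\<forall>r\<in>ringR \<sigma>. \<forall>x\<in>I. r * x \<in> I)"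

definition ideal_gen :: "(real^'n) set \<Rightarrow> 'n::finite elt set \<Rightarrow> 'n elt set" where
  "ideal_gen \<sigma> X = \<Inter>{J. is_ideal \<sigma> J \<and> X \<subseteq> J}"

definition monomial_ideal :: "(real^'n) set \<Rightarrow> 'n::finite elt set \<Rightarrow> bool" where
  "monomial_ideal \<sigma> I \<longleftrightarrow> is_ideal \<sigma> I \<and> I = ideal_gen \<sigma> {monom a | a. monom a \<in> I}"

definition Exps :: "(real^'n) set \<Rightarrow> 'n elt set \<Rightarrow> (int^'n) set" where
  "Exps \<sigma> I = {a \<in> semigp \<sigma>. monom a \<in> I}"

text \<open>delta = x^d f(theta), acting by x^a |-> f(a) x^(a+d), extended linearly\<close>
definition delta :: "'n::finite cpoly \<Rightarrow> int^'n \<Rightarrow> 'n elt \<Rightarrow> 'n elt" where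
  "delta f d p = (\<Sum>a\<in>Poly_Mapping.keys p. Poly_Mapping.single (a + d) (Poly_Mapping.lookup p a * peval f a))"

definition Vmon :: "'n::finite cpoly \<Rightarrow> (int^'n) set" where
  "Vmon f = {a. peval f a = 0}"

definition tset :: "'n::finite cpoly \<Rightarrow> int^'n \<Rightarrow> int^'n \<Rightarrow> real set" where
  "tset f d a = {t. \<exists>b\<in>Vmon f. rvec b = rvec a + t *\<^sub>R rvec d}"

definition val :: "'n::finite cpoly \<Rightarrow> int^'n \<Rightarrow> int^'n \<Rightarrow> ereal" where
  "val f d a = Inf (ereal ` tset f d a)"

definition pval :: "'n::finite cpoly \<Rightarrow> int^'n \<Rightarrow> int^'n \<Rightarrow> real" where
  "pval f d a = Max {t \<in> tset f d a. real_of_ereal (val f d a) \<le> t \<and> t < real_of_ereal (val f d a) + 1}"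

definition Vmon' :: "'n::finite cpoly \<Rightarrow> int^'n \<Rightarrow> (int^'n) set" where
  "Vmon' f d = {b. \<exists>a. \<bar>val f d a\<bar> \<noteq> \<infinity> \<and> rvec b = rvec a + pval f d a *\<^sub>R rvec d}"

text \<open>tuples in N^n are functions nat => nat vanishing from index n on\<close>
definition compatible :: "nat \<Rightarrow> (nat \<Rightarrow> int^'n) \<Rightarrow> int^'n \<Rightarrow> (nat \<Rightarrow> nat) set \<Rightarrow> bool" where
  "compatible n c d B \<longleftrightarrow> (\<forall>\<beta>\<in>B. (\<forall>i\<ge>n. \<beta> i = 0) \<and> (\<forall>i<n. \<beta> i = 0 \<or> hint (c i) d = 0))"

definition Wset :: "(real^'n) set \<Rightarrow> nat \<Rightarrow> (nat \<Rightarrow> int^'n) \<Rightarrow> (nat \<Rightarrow> nat) set \<Rightarrow> (int^'n) set" where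
  "Wset \<sigma> n c B = (\<Union>\<beta>\<in>B. {a \<in> semigp \<sigma>. \<forall>i<n. hint (c i) a \<ge> int (\<beta> i)})"

end

theory Submission
  imports Defs
begin

text \<open>Since \<open>d = q e\<close> with \<open>e\<close> primitive, the lattice points of the line \<open>a + \<real>d\<close> are
  \<open>a + \<int>e\<close>, and in steps of \<open>e\<close> the valuations become integers: \<open>val a = qval a / q\<close>,
  \<open>pval a = qpval a / q\<close>, where \<open>qval a\<close> is the lowest zero of \<open>f\<close> on the line and \<open>qpval a\<close>
  the highest zero less than \<open>q\<close> steps above it. Because \<open>H\<^sub>d\<close> divides \<open>f\<close>, \<open>f\<close> vanishes on a
  band of \<open>q\<close> consecutive points wherever the line crosses a facet not parallel to \<open>d\<close>; hence
  every line has zeros and \<open>vpt\<close> maps \<open>S\<close> into \<open>S\<close>.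

  A monomial ideal consists of the polynomials supported on an upward closed \<open>E \<subseteq> S\<close>, and
  \<open>\<delta>\<close> maps it onto those supported on \<open>{a + d | a \<in> E, f(a) \<noteq> 0}\<close>, so \<open>\<delta>\<close> fixes it iff \<open>E\<close>
  equals that set. For such \<open>E\<close>, every line \<open>a + \<int>e\<close> meeting \<open>E\<close> leaves it at \<open>vpt a\<close>, with
  \<open>f\<close> vanishing at the \<open>q\<close> points of the line ending there and nowhere below; recording the levels of
  \<open>E\<close> on the facets parallel to \<open>d\<close> gives an admissible \<open>B\<close>. Conversely, for admissible \<open>B\<close>
  the set \<open>{a \<in> W\<^sub>B. pval a \<ge> 0}\<close> is generated by \<open>V'\<^sub>m\<^sub>o\<^sub>n(f) \<inter> W\<^sub>B\<close> by condition (3) and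
  invariant under \<open>a \<mapsto> a + d\<close> by condition (2).\<close>

section \<open>Evaluating polynomials in \<open>\<theta>\<close> at lattice points\<close>

definition monomial_value :: "('n::finite \<Rightarrow>\<^sub>0 nat) \<Rightarrow> int^'n \<Rightarrow> complex" where
  "monomial_value m a = (\<Prod>j\<in>UNIV. (complex_of_int (a $ j)) ^ Poly_Mapping.lookup m j)"

lemma monomial_value_add: "monomial_value (m1 + m2) a = monomial_value m1 a * monomial_value m2 a"
  by (simp add: monomial_value_def lookup_add power_add prod.distrib)

lemma peval_eq_sum_keys: "peval f a = (\<Sum>m\<in>Poly_Mapping.keys f. Poly_Mapping.lookup f m * monomial_value m a)"
  by (simp add: peval_def monomial_value_def)

lemma peval_eq_sum_superset:
  assumes "finite K" "Poly_Mapping.keys f \<subseteq> K"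
  shows "peval f a = (\<Sum>m\<in>K. Poly_Mapping.lookup f m * monomial_value m a)"
  unfolding peval_eq_sum_keys
  by (rule sum.mono_neutral_left) (use assms in \<open>auto simp: in_keys_iff\<close>)

lemma peval_add: "peval (f + g) a = peval f a + peval g a"
proof -
  let ?K = "Poly_Mapping.keys f \<union> Poly_Mapping.keys g"
  have "peval (f + g) a = (\<Sum>m\<in>?K. Poly_Mapping.lookup (f + g) m * monomial_value m a)"
    by (rule peval_eq_sum_superset) (simp_all add: keys_add)
  also have "\<dots> = peval f a + peval g a"
    by (simp add: peval_eq_sum_superset[of ?K] lookup_add distrib_right sum.distrib)
  finally show ?thesis .
qed

lemma peval_zero [simp]: "peval 0 a = 0"
  by (simp add: peval_def)

lemma peval_sum: "peval (sum F A) a = (\<Sum>x\<in>A. peval (F x) a)"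
  by (induction A rule: infinite_finite_induct) (auto simp: peval_add)

lemma peval_single [simp]: "peval (Poly_Mapping.single m k) a = k * monomial_value m a"
  by (cases "k = 0") (simp_all add: peval_eq_sum_keys)

lemma poly_mapping_sum_single:
  "p = (\<Sum>m\<in>Poly_Mapping.keys p. Poly_Mapping.single m (Poly_Mapping.lookup p m))"
  by (rule poly_mapping_eqI) (simp add: lookup_sum lookup_single when_def in_keys_iff sum.delta)

lemma peval_mult: "peval (f * g) a = peval f a * peval g a"
proof -
  have "f * g = (\<Sum>m1\<in>Poly_Mapping.keys f. \<Sum>m2\<in>Poly_Mapping.keys g.
       Poly_Mapping.single (m1 + m2) (Poly_Mapping.lookup f m1 * Poly_Mapping.lookup g m2))"
    by (subst poly_mapping_sum_single[of f], subst poly_mapping_sum_single[of g])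
      (simp add: sum_distrib_left sum_distrib_right mult_single, rule sum.swap)
  then have "peval (f * g) a = (\<Sum>m1\<in>Poly_Mapping.keys f. \<Sum>m2\<in>Poly_Mapping.keys g.
       (Poly_Mapping.lookup f m1 * monomial_value m1 a) * (Poly_Mapping.lookup g m2 * monomial_value m2 a))"
    by (simp add: peval_sum monomial_value_add mult_ac)
  then show ?thesis
    by (simp add: peval_eq_sum_keys sum_product)
qed

lemma peval_one [simp]: "peval 1 a = 1"
  using peval_single[of 0 1 a] by (simp add: monomial_value_def)

lemma peval_prod: "peval (prod F A) a = (\<Prod>x\<in>A. peval (F x) a)"
  by (induction A rule: infinite_finite_induct) (auto simp: peval_mult)

lemma peval_diff: "peval (f - g) a = peval f a - peval g a"
  using peval_add[of "f - g" g a] by simp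

lemma peval_hpoly [simp]: "peval (hpoly c) a = of_int (hint c a)"
proof -
  have "monomial_value (Poly_Mapping.single j 1) a = of_int (a $ j)" for j
  proof -
    have "monomial_value (Poly_Mapping.single j 1) a
        = (\<Prod>j'\<in>UNIV. (if j = j' then complex_of_int (a $ j') else 1))"
      unfolding monomial_value_def lookup_single when_def by (rule prod.cong) auto
    then show ?thesis by (simp add: prod.delta')
  qed
  then show ?thesis by (simp add: hpoly_def peval_sum hint_def)
qed

lemma peval_pconst [simp]: "peval (pconst k) a = k"
  by (simp add: pconst_def monomial_value_def)

lemma peval_ffact:
  "peval (ffact g m) a = (if m < 0 then 1 else (\<Prod>j\<in>{0..nat m}. peval g a - of_nat j))"
  by (simp add: ffact_def peval_prod peval_diff)

lemma peval_dvd_eq_0: "g dvd f \<Longrightarrow> peval g a = 0 \<Longrightarrow> peval f a = 0"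
  by (auto simp: dvd_def peval_mult)

lemma peval_Hpoly_eq_0:
  assumes "i < n" "0 \<le> hint (c i) a" "hint (c i) a \<le> hint (c i) (- d) - 1"
  shows "peval (Hpoly n c d) a = 0"
proof -
  have "peval (ffact (hpoly (c i)) (hint (c i) (- d) - 1)) a = 0"
    using assms(2,3) unfolding peval_ffact by (auto intro!: bexI[of _ "nat (hint (c i) a)"])
  then show ?thesis
    using assms(1) by (auto simp: Hpoly_def peval_prod intro!: prod_zero bexI[of _ i])
qed

section \<open>Lattice vectors and linear forms\<close>

lemma hreal_eq_inner: "hreal c u = rvec c \<bullet> u"
  by (simp add: hreal_def rvec_def inner_vec_def)

lemma hreal_rvec: "hreal c (rvec a) = real_of_int (hint c a)"
  by (simp add: hreal_def rvec_def hint_def)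

lemma rvec_zero [simp]: "rvec 0 = 0"
  by (simp add: rvec_def vec_eq_iff)

lemma rvec_add: "rvec (a + b) = rvec a + rvec b"
  by (simp add: rvec_def vec_eq_iff)

lemma rvec_uminus: "rvec (- a) = - rvec a"
  by (simp add: rvec_def vec_eq_iff)

lemma rvec_smult: "rvec (k *s a) = real_of_int k *\<^sub>R rvec a"
  by (simp add: rvec_def vec_eq_iff)

lemma rvec_eq_iff: "rvec a = rvec b \<longleftrightarrow> a = b"
  by (simp add: rvec_def vec_eq_iff)

lemma hint_add: "hint c (a + b) = hint c a + hint c b"
  by (simp add: hint_def algebra_simps sum.distrib)

lemma hint_uminus: "hint c (- a) = - hint c a"
  by (simp add: hint_def sum_negf)

lemma hint_diff: "hint c (a - b) = hint c a - hint c b"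
  by (simp add: hint_def algebra_simps sum_subtractf)

lemma hint_smult: "hint c (k *s a) = k * hint c a"
  by (simp add: hint_def sum_distrib_left mult_ac)

lemma semigp_add: "a \<in> semigp \<sigma> \<Longrightarrow> b \<in> semigp \<sigma> \<Longrightarrow> a + b \<in> semigp \<sigma>"
  by (auto simp: semigp_def rvec_add dual_cone_def inner_add_left)

lemma semigp_zero [simp]: "0 \<in> semigp \<sigma>"
  by (simp add: semigp_def dual_cone_def)

lemma semigp_smult: "a \<in> semigp \<sigma> \<Longrightarrow> 0 \<le> k \<Longrightarrow> k *s a \<in> semigp \<sigma>"
  by (simp add: semigp_def rvec_smult dual_cone_def)

lemma primitive_vec_nonzero: "primitive_vec c \<Longrightarrow> c \<noteq> 0"
proof
  assume "primitive_vec c" "c = 0"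
  then have "\<bar>2::int\<bar> = 1" unfolding primitive_vec_def by (metis dvd_0_right zero_index)
  then show False by simp
qed

lemma rvec_nonzero: "c \<noteq> 0 \<Longrightarrow> rvec c \<noteq> 0"
  using rvec_eq_iff[of c 0] by simp

lemma facet_functions_nonneg:
  assumes "facet_functions \<sigma> n c" "i < n" "a \<in> semigp \<sigma>"
  shows "hint (c i) a \<ge> 0"
proof -
  have "hreal (c i) (rvec a) \<ge> 0"
    using assms unfolding facet_functions_def semigp_def by blast
  then show ?thesis by (simp add: hreal_rvec)
qed

lemma mult_floor_ge: "real_of_int k * real_of_int (floor y) \<ge> real_of_int k * y - \<bar>real_of_int k\<bar>"
proof (cases "k \<ge> 0")
  case True
  have "real_of_int k * (y - 1) \<le> real_of_int k * real_of_int (floor y)"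
    using True by (intro mult_left_mono) linarith+
  then show ?thesis using True by (simp add: algebra_simps)
next
  case False
  have "real_of_int k * y \<le> real_of_int k * real_of_int (floor y)"
    using False by (intro mult_left_mono_neg) auto
  then show ?thesis by simp
qed

section \<open>Two facts about full-dimensional convex sets\<close>

lemma inner_pos_at_interior:
  fixes c :: "'a::euclidean_space"
  assumes "c \<noteq> 0" "D \<subseteq> {x. c \<bullet> x \<ge> 0}" "u \<in> interior D"
  shows "c \<bullet> u > 0"
proof -
  obtain r where r: "r > 0" "ball u r \<subseteq> D" using assms(3) by (meson mem_interior)
  define p where "p = u - ((r/2) / norm c) *\<^sub>R c"
  have "dist u p < r" using r assms(1) by (simp add: p_def dist_norm)
  then have "c \<bullet> p \<ge> 0" using r assms(2) by auto
  moreover have "c \<bullet> p = c \<bullet> u - (r/2) * norm c"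
    using assms(1) by (simp add: p_def inner_diff_right dot_square_norm power2_eq_square)
  moreover have "(r/2) * norm c > 0" using r assms(1) by simp
  ultimately show ?thesis by linarith
qed

text \<open>A facet of a full-dimensional convex set spans a hyperplane, so any two supporting
  halfspaces through it coincide.\<close>

lemma facet_supporting_halfspaces_agree:
  fixes a c :: "'a::euclidean_space"
  assumes fac: "C facet_of D" and Ca: "C \<subseteq> {x. a \<bullet> x = b}" and Da: "D \<subseteq> {x. a \<bullet> x \<le> b}"
    and Cc: "C \<subseteq> {x. c \<bullet> x = 0}" and c0: "c \<noteq> 0" and Dc: "D \<subseteq> {x. c \<bullet> x \<ge> 0}"
    and u0: "u0 \<in> interior D" and u: "c \<bullet> u \<ge> 0"
  shows "a \<bullet> u \<le> b"
proof -
  have "aff_dim D = int DIM('a)"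
    using u0 affine_hull_nonempty_interior by (metis aff_dim_UNIV aff_dim_affine_hull empty_iff)
  then have adC: "aff_dim C = int DIM('a) - 1" using fac by (simp add: facet_of_def)
  have "affine hull C = {x. c \<bullet> x = 0}"
  proof (rule affine_dim_equal)
    show "affine hull C \<noteq> {}" using fac by (simp add: facet_of_def)
    show "affine hull C \<subseteq> {x. c \<bullet> x = 0}" using Cc by (intro hull_minimal affine_hyperplane)
    show "aff_dim (affine hull C) = aff_dim {x. c \<bullet> x = 0}" using adC c0 by simp
  qed (simp_all add: affine_hyperplane)
  moreover have "affine hull C \<subseteq> {x. a \<bullet> x = b}" using Ca by (intro hull_minimal affine_hyperplane)
  ultimately have hyp: "\<And>x. c \<bullet> x = 0 \<Longrightarrow> a \<bullet> x = b" by auto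
  have b0: "b = 0" using hyp[of 0] by simp
  have cu0: "c \<bullet> u0 > 0" using inner_pos_at_interior[OF c0 Dc u0] .
  have au0: "a \<bullet> u0 \<le> 0" using Da u0 b0 interior_subset by blast
  have "c \<bullet> ((c \<bullet> u0) *\<^sub>R u - (c \<bullet> u) *\<^sub>R u0) = 0" by (simp add: inner_diff_right)
  then have "a \<bullet> ((c \<bullet> u0) *\<^sub>R u - (c \<bullet> u) *\<^sub>R u0) = 0" using hyp b0 by blast
  then have "(c \<bullet> u0) * (a \<bullet> u) = (c \<bullet> u) * (a \<bullet> u0)" by (simp add: inner_diff_right)
  moreover have "(c \<bullet> u) * (a \<bullet> u0) \<le> 0" using u au0 by (simp add: mult_nonneg_nonpos)
  ultimately have "(c \<bullet> u0) * (a \<bullet> u) \<le> 0" by simp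
  then show ?thesis using cu0 b0 by (simp add: mult_le_0_iff)
qed

section \<open>The cone, its dual and the semigroup \<open>S\<close>\<close>

locale cone_setup =
  fixes \<sigma> :: "(real^'n::finite) set" and n :: nat and c :: "nat \<Rightarrow> int^'n"
  assumes cone: "rat_poly_cone \<sigma>" and fulldim: "interior \<sigma> \<noteq> {}"
    and strong: "strongly_convex \<sigma>"
    and facets: "facet_functions \<sigma> n c"
begin

lemma cone_generators:
  obtains V :: "(int^'n) set" where "finite V"
    "\<sigma> = {x. \<exists>w. (\<forall>v\<in>V. w v \<ge> 0) \<and> x = (\<Sum>v\<in>V. w v *\<^sub>R rvec v)}"
  using cone unfolding rat_poly_cone_def by blast

lemma cone_add: "x \<in> \<sigma> \<Longrightarrow> y \<in> \<sigma> \<Longrightarrow> x + y \<in> \<sigma>"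
proof -
  assume "x \<in> \<sigma>" "y \<in> \<sigma>"
  moreover obtain V where V: "finite V"
    "\<sigma> = {x. \<exists>w. (\<forall>v\<in>V. w v \<ge> 0) \<and> x = (\<Sum>v\<in>V. w v *\<^sub>R rvec v)}"
    by (rule cone_generators)
  ultimately obtain w1 w2 where "\<forall>v\<in>V. w1 v \<ge> 0" "x = (\<Sum>v\<in>V. w1 v *\<^sub>R rvec v)"
    "\<forall>v\<in>V. w2 v \<ge> 0" "y = (\<Sum>v\<in>V. w2 v *\<^sub>R rvec v)" by blast
  then show "x + y \<in> \<sigma>" unfolding V
    by (intro CollectI exI[of _ "\<lambda>v. w1 v + w2 v"]) (simp add: scaleR_add_left sum.distrib)
qed

lemma cone_scaleR: "x \<in> \<sigma> \<Longrightarrow> 0 \<le> r \<Longrightarrow> r *\<^sub>R x \<in> \<sigma>"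
proof -
  assume "x \<in> \<sigma>" "0 \<le> r"
  moreover obtain V where V: "finite V"
    "\<sigma> = {x. \<exists>w. (\<forall>v\<in>V. w v \<ge> 0) \<and> x = (\<Sum>v\<in>V. w v *\<^sub>R rvec v)}"
    by (rule cone_generators)
  ultimately obtain w where "\<forall>v\<in>V. w v \<ge> 0" "x = (\<Sum>v\<in>V. w v *\<^sub>R rvec v)" by blast
  then show "r *\<^sub>R x \<in> \<sigma>" unfolding V using \<open>0 \<le> r\<close>
    by (intro CollectI exI[of _ "\<lambda>v. r * w v"]) (simp add: scaleR_sum_right)
qed

lemma cone_nonneg_combination:
  "finite A \<Longrightarrow> A \<subseteq> \<sigma> \<Longrightarrow> (\<forall>x\<in>A. w x \<ge> 0) \<Longrightarrow> (\<Sum>x\<in>A. w x *\<^sub>R x) \<in> \<sigma>"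
proof (induction A rule: finite_induct)
  case empty
  obtain V where "\<sigma> = {x. \<exists>w. (\<forall>v\<in>V. w v \<ge> 0) \<and> x = (\<Sum>v\<in>V. w v *\<^sub>R rvec v)}"
    by (rule cone_generators)
  then show ?case by (auto intro!: exI[of _ "\<lambda>_. 0"])
qed (auto intro: cone_add cone_scaleR)

lemma dual_cone_eq_generator_halfspaces:
  obtains V :: "(int^'n) set" where "finite V" "\<And>v. v \<in> V \<Longrightarrow> rvec v \<in> \<sigma>"
    "dual_cone \<sigma> = {u. \<forall>v\<in>V. rvec v \<bullet> u \<ge> 0}"
proof -
  obtain V where V: "finite V" "\<sigma> = {x. \<exists>w. (\<forall>v\<in>V. w v \<ge> 0) \<and> x = (\<Sum>v\<in>V. w v *\<^sub>R rvec v)}"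
    by (rule cone_generators)
  have gen: "rvec v \<in> \<sigma>" if "v \<in> V" for v
    using that unfolding V
    by (auto intro!: exI[of _ "\<lambda>x. if x = v then 1 else 0"]
             simp: if_distrib[of "\<lambda>r. r *\<^sub>R _"] V(1) cong: if_cong)
  have "dual_cone \<sigma> = {u. \<forall>v\<in>V. rvec v \<bullet> u \<ge> 0}"
  proof (intro equalityI subsetI)
    fix u assume "u \<in> dual_cone \<sigma>"
    then show "u \<in> {u. \<forall>v\<in>V. rvec v \<bullet> u \<ge> 0}"
      using gen by (auto simp: dual_cone_def inner_commute)
  next
    fix u assume "u \<in> {u. \<forall>v\<in>V. rvec v \<bullet> u \<ge> 0}"
    then show "u \<in> dual_cone \<sigma>" unfolding dual_cone_def V
      by (auto simp: inner_sum_right inner_commute intro!: sum_nonneg)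
  qed
  then show thesis using that V(1) gen by blast
qed

lemma polyhedron_dual_cone: "polyhedron (dual_cone \<sigma>)"
proof -
  obtain V where V: "finite V" "dual_cone \<sigma> = {u. \<forall>v\<in>V. rvec v \<bullet> u \<ge> 0}"
    by (rule dual_cone_eq_generator_halfspaces) blast
  then have "dual_cone \<sigma> = (\<Inter>v\<in>V. {u. rvec v \<bullet> u \<ge> 0})" by auto
  then show ?thesis using V(1) by (auto intro!: polyhedron_Inter polyhedron_halfspace_ge)
qed

lemma zero_notin_convex_hull:
  assumes "finite T" "T \<subseteq> \<sigma> - {0}"
  shows "0 \<notin> convex hull T"
proof
  assume "0 \<in> convex hull T"
  then obtain w where w: "\<forall>x\<in>T. 0 \<le> w x" "sum w T = 1" "(\<Sum>x\<in>T. w x *\<^sub>R x) = 0"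
    unfolding convex_hull_finite[OF assms(1)] by auto
  obtain x0 where x0: "x0 \<in> T" "w x0 > 0"
    using w(1,2) by (metis less_eq_real_def sum.neutral zero_neq_one)
  have "w x0 *\<^sub>R x0 + (\<Sum>x\<in>T - {x0}. w x *\<^sub>R x) = 0"
    using x0(1) assms(1) w(3) by (simp add: sum.remove)
  then have "w x0 *\<^sub>R x0 = - (\<Sum>x\<in>T - {x0}. w x *\<^sub>R x)" by (simp add: eq_neg_iff_add_eq_0)
  moreover have "(\<Sum>x\<in>T - {x0}. w x *\<^sub>R x) \<in> \<sigma>"
    using assms w(1) by (intro cone_nonneg_combination) auto
  moreover have "w x0 *\<^sub>R x0 \<in> \<sigma>" using x0 assms(2) by (intro cone_scaleR) auto
  ultimately have "w x0 *\<^sub>R x0 \<in> \<sigma> \<inter> uminus ` \<sigma>" by blast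
  then have "w x0 *\<^sub>R x0 = 0" using strong unfolding strongly_convex_def by blast
  then show False using x0 assms(2) by auto
qed

text \<open>Strong convexity of \<open>\<sigma>\<close> separates its nonzero generators from \<open>0\<close>; the normal vector of
  the separating hyperplane lies in the open set where all generators are positive.\<close>

lemma interior_dual_cone_nonempty: "interior (dual_cone \<sigma>) \<noteq> {}"
proof -
  obtain V where V: "finite V" "\<And>v. v \<in> V \<Longrightarrow> rvec v \<in> \<sigma>"
    "dual_cone \<sigma> = {u. \<forall>v\<in>V. rvec v \<bullet> u \<ge> 0}"
    by (rule dual_cone_eq_generator_halfspaces) blast
  define T where "T = rvec ` V - {0}"
  have T: "finite T" "T \<subseteq> \<sigma> - {0}" using V by (auto simp: T_def)
  obtain a b where ab: "0 < b" "\<forall>x\<in>convex hull T. a \<bullet> x > b"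
    using separating_hyperplane_closed_0[OF convex_convex_hull
        compact_imp_closed[OF finite_imp_compact_convex_hull[OF T(1)]] zero_notin_convex_hull[OF T]]
    by blast
  define U where "U = (\<Inter>x\<in>T. {u. x \<bullet> u > 0})"
  have "open U" unfolding U_def using T(1) by (auto intro!: open_INT open_halfspace_gt)
  moreover have "a \<in> U"
    using ab by (auto simp: U_def inner_commute intro: hull_inc less_trans[of 0 b])
  moreover have "U \<subseteq> dual_cone \<sigma>"
    unfolding V(3) U_def T_def by (force intro: less_imp_le)
  ultimately have "a \<in> interior (dual_cone \<sigma>)" using interior_maximal by blast
  then show ?thesis by auto
qed

lemma facet_function_props:
  "i < n \<Longrightarrow> primitive_vec (c i) \<and> (\<forall>u\<in>dual_cone \<sigma>. hreal (c i) u \<ge> 0)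
     \<and> facet_hyp \<sigma> (c i) facet_of dual_cone \<sigma>"
  using facets by (simp add: facet_functions_def)

lemma dual_cone_iff: "u \<in> dual_cone \<sigma> \<longleftrightarrow> (\<forall>i<n. hreal (c i) u \<ge> 0)"
proof
  assume "u \<in> dual_cone \<sigma>"
  then show "\<forall>i<n. hreal (c i) u \<ge> 0" using facet_function_props by blast
next
  assume hu: "\<forall>i<n. hreal (c i) u \<ge> 0"
  obtain u0 where u0: "u0 \<in> interior (dual_cone \<sigma>)" using interior_dual_cone_nonempty by blast
  have aff: "affine hull (dual_cone \<sigma>) = UNIV" using u0 affine_hull_nonempty_interior by blast
  obtain F where F: "finite F" "dual_cone \<sigma> = affine hull (dual_cone \<sigma>) \<inter> \<Inter>F"
    "\<And>h. h \<in> F \<Longrightarrow> \<exists>a b. a \<noteq> 0 \<and> h = {x. a \<bullet> x \<le> b}"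
    "\<And>F'. F' \<subset> F \<Longrightarrow> dual_cone \<sigma> \<subset> affine hull (dual_cone \<sigma>) \<inter> \<Inter>F'"
    using polyhedron_dual_cone by (simp add: polyhedron_Int_affine_minimal) meson
  then obtain a b where ab: "\<And>h. h \<in> F \<Longrightarrow> a h \<noteq> 0 \<and> h = {x. a h \<bullet> x \<le> b h}"
    by metis
  have "u \<in> h" if hF: "h \<in> F" for h
  proof -
    have fac: "dual_cone \<sigma> \<inter> {x. a h \<bullet> x = b h} facet_of dual_cone \<sigma>"
      using facet_of_polyhedron_explicit[OF F(1) F(2) ab F(4)] hF by blast
    then obtain i where i: "i < n" "dual_cone \<sigma> \<inter> {x. a h \<bullet> x = b h} = facet_hyp \<sigma> (c i)"
      using facets unfolding facet_functions_def by blast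
    have "a h \<bullet> u \<le> b h"
    proof (rule facet_supporting_halfspaces_agree[OF fac])
      show "dual_cone \<sigma> \<subseteq> {x. a h \<bullet> x \<le> b h}" using F(2) ab hF by blast
      show "dual_cone \<sigma> \<inter> {x. a h \<bullet> x = b h} \<subseteq> {x. rvec (c i) \<bullet> x = 0}"
        using i(2) by (auto simp: facet_hyp_def hreal_eq_inner)
      show "rvec (c i) \<noteq> 0"
        using facet_function_props[OF i(1)] primitive_vec_nonzero rvec_nonzero by blast
      show "dual_cone \<sigma> \<subseteq> {x. rvec (c i) \<bullet> x \<ge> 0}"
        using facet_function_props[OF i(1)] by (auto simp: hreal_eq_inner)
      show "rvec (c i) \<bullet> u \<ge> 0" using hu i(1) by (simp add: hreal_eq_inner)
    qed (use u0 in auto)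
    then show ?thesis using ab hF by blast
  qed
  then show "u \<in> dual_cone \<sigma>" using F(2) aff by blast
qed

lemma semigp_iff: "a \<in> semigp \<sigma> \<longleftrightarrow> (\<forall>i<n. hint (c i) a \<ge> 0)"
  by (simp add: semigp_def dual_cone_iff hreal_rvec)

text \<open>Scale an interior point of the dual cone until rounding down its coordinates costs
  less than \<open>1\<close> on every facet function.\<close>

lemma semigp_interior_point: "\<exists>a \<in> semigp \<sigma>. \<forall>i<n. hint (c i) a \<ge> 1"
proof -
  obtain u0 where u0: "u0 \<in> interior (dual_cone \<sigma>)" using interior_dual_cone_nonempty by blast
  have pos: "hreal (c i) u0 > 0" if "i < n" for i
    using inner_pos_at_interior[of "rvec (c i)" "dual_cone \<sigma>" u0] facet_function_props[OF that]
      primitive_vec_nonzero rvec_nonzero u0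
    by (auto simp: hreal_eq_inner)
  define K where "K i = 1 + (\<Sum>j\<in>UNIV. \<bar>real_of_int (c i $ j)\<bar>)" for i
  define N where "N = (\<Sum>i<n. K i / hreal (c i) u0)"
  have KN: "N * hreal (c i) u0 \<ge> K i" if "i < n" for i
  proof -
    have "K i / hreal (c i) u0 \<le> N" unfolding N_def
      using that pos
      by (intro member_le_sum) (auto simp: K_def intro!: divide_nonneg_pos add_nonneg_nonneg sum_nonneg)
    then show ?thesis using pos[OF that] by (simp add: divide_le_eq)
  qed
  define a where "a = (\<chi> j. floor (N * u0 $ j))"
  have "hint (c i) a \<ge> 1" if "i < n" for i
  proof -
    have "real_of_int (hint (c i) a)
        = (\<Sum>j\<in>UNIV. real_of_int (c i $ j) * real_of_int (floor (N * u0 $ j)))"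
      by (simp add: hint_def a_def)
    also have "\<dots> \<ge> (\<Sum>j\<in>UNIV. real_of_int (c i $ j) * (N * u0 $ j) - \<bar>real_of_int (c i $ j)\<bar>)"
      by (intro sum_mono mult_floor_ge)
    also have "(\<Sum>j\<in>UNIV. real_of_int (c i $ j) * (N * u0 $ j) - \<bar>real_of_int (c i $ j)\<bar>)
        = N * hreal (c i) u0 - (K i - 1)"
      by (simp add: K_def hreal_def sum_subtractf sum_distrib_left mult_ac)
    finally show ?thesis using KN[OF that] by linarith
  qed
  moreover then have "a \<in> semigp \<sigma>" unfolding semigp_iff by (meson order_trans zero_le_one)
  ultimately show ?thesis by blast
qed

text \<open>Full-dimensionality of \<open>\<sigma>\<close>: if \<open>d\<close> and \<open>-d\<close> were both in \<open>S\<close>, then \<open>rvec d\<close> would be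
  orthogonal to an open subset of \<open>\<sigma>\<close>.\<close>

lemma exists_facet_neg:
  assumes "d \<noteq> 0" "- d \<in> semigp \<sigma>"
  shows "\<exists>i<n. hint (c i) d < 0"
proof (rule ccontr)
  assume "\<not> ?thesis"
  then have "d \<in> semigp \<sigma>" unfolding semigp_iff by (meson not_le)
  then have orth: "rvec d \<bullet> v = 0" if "v \<in> \<sigma>" for v
    using assms(2) that by (force simp: semigp_def dual_cone_def rvec_uminus)
  obtain x where x: "x \<in> interior \<sigma>" using fulldim by blast
  then obtain r where r: "r > 0" "ball x r \<subseteq> \<sigma>" by (meson mem_interior)
  have rd: "rvec d \<noteq> 0" using assms(1) rvec_nonzero by blast
  define y where "y = x + ((r/2) / norm (rvec d)) *\<^sub>R rvec d"
  have "dist x y < r" using r rd by (simp add: y_def dist_norm)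
  then have "rvec d \<bullet> y = 0" using r orth by auto
  moreover have "rvec d \<bullet> x = 0" using orth x interior_subset by blast
  ultimately have "(r/2) / norm (rvec d) * (rvec d \<bullet> rvec d) = 0"
    by (simp add: y_def inner_add_right)
  then show False using r rd by simp
qed

end

section \<open>Monomial ideals and their exponent sets\<close>

definition polys_on :: "(int^'n) set \<Rightarrow> 'n elt set" where
  "polys_on E = {p. Poly_Mapping.keys p \<subseteq> E}"

definition exp_ideal :: "(real^'n) set \<Rightarrow> (int^'n) set \<Rightarrow> bool" where
  "exp_ideal \<sigma> E \<longleftrightarrow> E \<subseteq> semigp \<sigma> \<and> (\<forall>x\<in>E. \<forall>s\<in>semigp \<sigma>. x + s \<in> E)"

definition exp_hull :: "(real^'n) set \<Rightarrow> (int^'n) set \<Rightarrow> (int^'n) set" where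
  "exp_hull \<sigma> X = {x + s | x s. x \<in> X \<and> s \<in> semigp \<sigma>}"

lemma keys_monom [simp]: "Poly_Mapping.keys (monom a) = {a}"
  by (simp add: monom_def)

lemma monom_nonzero [simp]: "monom a \<noteq> 0"
  using keys_monom[of a] by (metis keys_zero insert_not_empty)

lemma monom_in_polys_on_iff: "monom a \<in> polys_on E \<longleftrightarrow> a \<in> E"
  by (simp add: polys_on_def)

lemma is_ideal_polys_on:
  assumes "exp_ideal \<sigma> E" shows "is_ideal \<sigma> (polys_on E)"
  unfolding is_ideal_def
proof (intro conjI ballI)
  show "polys_on E \<subseteq> ringR \<sigma>" using assms by (auto simp: polys_on_def ringR_def exp_ideal_def)
  show "0 \<in> polys_on E" by (simp add: polys_on_def)
  fix x y assume "x \<in> polys_on E" "y \<in> polys_on E"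
  then show "x + y \<in> polys_on E" unfolding polys_on_def using keys_add[of x y] by auto
next
  fix r x assume r: "r \<in> ringR \<sigma>" and x: "x \<in> polys_on E"
  have "Poly_Mapping.keys (r * x) \<subseteq> E"
  proof
    fix k assume "k \<in> Poly_Mapping.keys (r * x)"
    then obtain a b where "k = b + a" "a \<in> Poly_Mapping.keys r" "b \<in> Poly_Mapping.keys x"
      using keys_mult[of r x] by (auto simp: add.commute)
    then show "k \<in> E" using assms r x unfolding ringR_def polys_on_def exp_ideal_def by blast
  qed
  then show "r * x \<in> polys_on E" by (simp add: polys_on_def)
qed

lemma exp_ideal_exp_hull: "X \<subseteq> semigp \<sigma> \<Longrightarrow> exp_ideal \<sigma> (exp_hull \<sigma> X)"
  unfolding exp_ideal_def exp_hull_def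
  by (auto intro: semigp_add) (metis add.assoc semigp_add)

lemma exp_hull_exp_ideal: "exp_ideal \<sigma> E \<Longrightarrow> exp_hull \<sigma> E = E"
  unfolding exp_hull_def exp_ideal_def by (auto, metis add.right_neutral semigp_zero)

lemma ideal_sum_mem:
  assumes "is_ideal \<sigma> J" "\<And>x. x \<in> A \<Longrightarrow> F x \<in> J"
  shows "sum F A \<in> J"
  using assms(2) by (induction A rule: infinite_finite_induct) (use assms(1) in \<open>auto simp: is_ideal_def\<close>)

lemma ideal_gen_monom_eq:
  assumes "X \<subseteq> semigp \<sigma>"
  shows "ideal_gen \<sigma> (monom ` X) = polys_on (exp_hull \<sigma> X)"
proof (intro equalityI)
  have "is_ideal \<sigma> (polys_on (exp_hull \<sigma> X))"
    using is_ideal_polys_on exp_ideal_exp_hull assms by blast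
  moreover have "monom ` X \<subseteq> polys_on (exp_hull \<sigma> X)"
    by (force simp: polys_on_def exp_hull_def)
  ultimately show "ideal_gen \<sigma> (monom ` X) \<subseteq> polys_on (exp_hull \<sigma> X)"
    unfolding ideal_gen_def by blast
next
  show "polys_on (exp_hull \<sigma> X) \<subseteq> ideal_gen \<sigma> (monom ` X)"
    unfolding ideal_gen_def
  proof (intro subsetI InterI, clarify)
    fix p J assume p: "p \<in> polys_on (exp_hull \<sigma> X)" and J: "is_ideal \<sigma> J" "monom ` X \<subseteq> J"
    have "Poly_Mapping.single k (Poly_Mapping.lookup p k) \<in> J" if k: "k \<in> Poly_Mapping.keys p" for k
    proof -
      obtain x s where xs: "k = x + s" "x \<in> X" "s \<in> semigp \<sigma>"
        using p k by (auto simp: polys_on_def exp_hull_def)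
      have "Poly_Mapping.single s (Poly_Mapping.lookup p k) * monom x \<in> J"
        using J xs by (auto simp: is_ideal_def ringR_def)
      then show ?thesis by (simp add: monom_def mult_single xs add.commute)
    qed
    then have "(\<Sum>k\<in>Poly_Mapping.keys p. Poly_Mapping.single k (Poly_Mapping.lookup p k)) \<in> J"
      by (intro ideal_sum_mem[OF J(1)])
    then show "p \<in> J" using poly_mapping_sum_single[of p] by simp
  qed
qed

lemma Exps_polys_on: "E \<subseteq> semigp \<sigma> \<Longrightarrow> Exps \<sigma> (polys_on E) = E"
  unfolding Exps_def monom_in_polys_on_iff by auto

lemma polys_on_inject: "polys_on E1 = polys_on E2 \<Longrightarrow> E1 = E2"
  by (metis monom_in_polys_on_iff subsetI subset_antisym)

lemma polys_on_eq_zero_iff: "polys_on E = {0} \<longleftrightarrow> E = {}"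
proof
  assume "polys_on E = {0}"
  then show "E = {}" by (metis monom_in_polys_on_iff monom_nonzero singletonD equals0I)
qed (auto simp: polys_on_def)

lemma monomial_ideal_polys_on:
  assumes "exp_ideal \<sigma> E"
  shows "monomial_ideal \<sigma> (polys_on E)"
proof -
  have "E \<subseteq> semigp \<sigma>" using assms by (simp add: exp_ideal_def)
  then have "ideal_gen \<sigma> (monom ` E) = polys_on E"
    using ideal_gen_monom_eq exp_hull_exp_ideal[OF assms] by metis
  moreover have "{monom a | a. monom a \<in> polys_on E} = monom ` E"
    by (auto simp: monom_in_polys_on_iff)
  ultimately show ?thesis
    unfolding monomial_ideal_def using is_ideal_polys_on[OF assms] by simp
qed

lemma monomial_ideal_eq_polys_on:
  assumes "monomial_ideal \<sigma> I"
  shows "exp_ideal \<sigma> (Exps \<sigma> I)" "I = polys_on (Exps \<sigma> I)"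
proof -
  have id: "is_ideal \<sigma> I" using assms by (simp add: monomial_ideal_def)
  have "x + s \<in> Exps \<sigma> I" if "x \<in> Exps \<sigma> I" "s \<in> semigp \<sigma>" for x s
  proof -
    have "monom s * monom x \<in> I" "x + s \<in> semigp \<sigma>"
      using id that by (auto simp: is_ideal_def Exps_def ringR_def intro: semigp_add)
    then show "x + s \<in> Exps \<sigma> I" by (simp add: Exps_def monom_def mult_single add.commute)
  qed
  then show up: "exp_ideal \<sigma> (Exps \<sigma> I)" unfolding exp_ideal_def Exps_def by blast
  have "{monom a | a. monom a \<in> I} = monom ` Exps \<sigma> I"
    using id by (auto simp: Exps_def is_ideal_def ringR_def)
  then have "I = ideal_gen \<sigma> (monom ` Exps \<sigma> I)" using assms by (simp add: monomial_ideal_def)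
  also have "\<dots> = polys_on (Exps \<sigma> I)"
    using ideal_gen_monom_eq[of "Exps \<sigma> I"] exp_hull_exp_ideal[OF up] by (simp add: Exps_def)
  finally show "I = polys_on (Exps \<sigma> I)" .
qed

definition delta_exps :: "'n::finite cpoly \<Rightarrow> int^'n \<Rightarrow> (int^'n) set \<Rightarrow> (int^'n) set" where
  "delta_exps f d E = {a + d | a. a \<in> E \<and> peval f a \<noteq> 0}"

lemma mem_delta_exps_iff: "x \<in> delta_exps f d E \<longleftrightarrow> x - d \<in> E \<and> x - d \<notin> Vmon f"
  by (force simp: delta_exps_def Vmon_def)

lemma lookup_delta:
  "Poly_Mapping.lookup (delta f d p) k = Poly_Mapping.lookup p (k - d) * peval f (k - d)"
proof -
  have "Poly_Mapping.lookup (delta f d p) k =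
     (\<Sum>a\<in>Poly_Mapping.keys p. if a = k - d then Poly_Mapping.lookup p a * peval f a else 0)"
    unfolding delta_def lookup_sum by (intro sum.cong) (auto simp: lookup_single when_def)
  then show ?thesis by (simp add: sum.delta' in_keys_iff)
qed

text \<open>Surjectivity: divide each coefficient by the nonzero value of \<open>f\<close> at the shifted exponent.\<close>

lemma delta_image_polys_on: "delta f d ` polys_on E = polys_on (delta_exps f d E)"
proof (intro equalityI subsetI)
  fix x assume "x \<in> delta f d ` polys_on E"
  then obtain p where "p \<in> polys_on E" "x = delta f d p" by blast
  then show "x \<in> polys_on (delta_exps f d E)"
    by (auto simp: polys_on_def mem_delta_exps_iff in_keys_iff lookup_delta Vmon_def)
next
  fix x assume x: "x \<in> polys_on (delta_exps f d E)"
  define r where "r = (\<Sum>b\<in>Poly_Mapping.keys x.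
     Poly_Mapping.single (b - d) (Poly_Mapping.lookup x b / peval f (b - d)))"
  have lr: "Poly_Mapping.lookup r y = (if y + d \<in> Poly_Mapping.keys x
      then Poly_Mapping.lookup x (y + d) / peval f y else 0)" for y
  proof -
    have "Poly_Mapping.lookup r y = (\<Sum>b\<in>Poly_Mapping.keys x.
        if b = y + d then Poly_Mapping.lookup x b / peval f (b - d) else 0)"
      unfolding r_def lookup_sum by (intro sum.cong) (auto simp: lookup_single when_def)
    then show ?thesis by (simp add: sum.delta')
  qed
  have "r \<in> polys_on E"
    using x by (auto simp: polys_on_def in_keys_iff lr mem_delta_exps_iff split: if_splits)
  moreover have "delta f d r = x"
  proof (rule poly_mapping_eqI)
    fix k
    show "Poly_Mapping.lookup (delta f d r) k = Poly_Mapping.lookup x k"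
      using x by (cases "k \<in> Poly_Mapping.keys x")
        (auto simp: lookup_delta lr in_keys_iff polys_on_def mem_delta_exps_iff Vmon_def)
  qed
  ultimately show "x \<in> delta f d ` polys_on E" by blast
qed

section \<open>Valuations along the lines \<open>a + \<int>e\<close>\<close>

lemma int_Inf_mem:
  fixes X :: "int set"
  assumes "x \<in> X" "bdd_below X"
  shows "Inf X \<in> X"
proof -
  obtain b where b: "\<forall>y\<in>X. b \<le> y" using assms(2) unfolding bdd_below_def by blast
  let ?F = "X \<inter> {b..x}"
  have F: "finite ?F" "x \<in> ?F" using assms(1) b by auto
  have "Min ?F \<le> y" if "y \<in> X" for y
  proof (cases "y \<le> x")
    case True then show ?thesis using that b F(1) by (intro Min_le) auto
  next
    case False then show ?thesis using Min_le[OF F] by linarith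
  qed
  moreover have "Min ?F \<in> X" using Min_in[OF F(1)] F(2) by blast
  ultimately show ?thesis using cInf_eq_minimum by metis
qed

lemma int_Sup_mem:
  fixes X :: "int set"
  assumes "x \<in> X" "bdd_above X"
  shows "Sup X \<in> X"
proof -
  obtain b where b: "\<forall>y\<in>X. y \<le> b" using assms(2) unfolding bdd_above_def by blast
  let ?F = "X \<inter> {x..b}"
  have F: "finite ?F" "x \<in> ?F" using assms(1) b by auto
  have "y \<le> Max ?F" if "y \<in> X" for y
  proof (cases "x \<le> y")
    case True then show ?thesis using that b F(1) by (intro Max_ge) auto
  next
    case False then show ?thesis using Max_ge[OF F] by linarith
  qed
  moreover have "Max ?F \<in> X" using Max_in[OF F(1)] F(2) by blast
  ultimately show ?thesis using cSup_eq_maximum by metis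
qed

locale main_setup = cone_setup \<sigma> n c for \<sigma> :: "(real^'n::finite) set" and n c +
  fixes f :: "'n cpoly" and d e :: "int^'n" and q :: nat
  assumes hdiv: "Hpoly n c d dvd f" and dnz: "d \<noteq> 0" and dS: "- d \<in> semigp \<sigma>"
    and q: "q \<ge> 1" and eprim: "primitive_vec e" and dqe: "d = (\<chi> j. int q * e $ j)"
begin

lemma d_eq: "d = int q *s e"
  by (simp add: dqe vec_eq_iff)

lemma rvec_d: "rvec d = real q *\<^sub>R rvec e"
  by (simp add: d_eq rvec_smult)

definition line_zeros :: "int^'n \<Rightarrow> int set" where
  "line_zeros a = {k. a + k *s e \<in> Vmon f}"

definition finite_val :: "int^'n \<Rightarrow> bool" where
  "finite_val a \<longleftrightarrow> line_zeros a \<noteq> {} \<and> bdd_below (line_zeros a)"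

definition qval :: "int^'n \<Rightarrow> int" where
  "qval a = Inf (line_zeros a)"

definition qpval :: "int^'n \<Rightarrow> int" where
  "qpval a = Max {k \<in> line_zeros a. k < qval a + int q}"

definition vpt :: "int^'n \<Rightarrow> int^'n" where
  "vpt a = a + qpval a *s e"

lemma line_zeros_shift: "k \<in> line_zeros (a + m *s e) \<longleftrightarrow> k + m \<in> line_zeros a"
  by (simp add: line_zeros_def algebra_simps vector_sadd_rdistrib)

text \<open>As \<open>e\<close> is primitive, the lattice points on the real line \<open>a + \<real>d\<close> are exactly \<open>a + \<int>e\<close>.\<close>

lemma tset_eq_line_zeros: "tset f d a = (\<lambda>k. real_of_int k / real q) ` line_zeros a"
proof (intro equalityI subsetI)
  fix t assume "t \<in> (\<lambda>k. real_of_int k / real q) ` line_zeros a"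
  then obtain k where k: "k \<in> line_zeros a" "t = real_of_int k / real q" by blast
  have "rvec (a + k *s e) = rvec a + t *\<^sub>R rvec d"
    using q by (simp add: k(2) rvec_d rvec_add rvec_smult)
  then show "t \<in> tset f d a" using k(1) unfolding tset_def line_zeros_def by blast
next
  fix t assume "t \<in> tset f d a"
  then obtain b where b: "b \<in> Vmon f" "rvec b = rvec a + t *\<^sub>R rvec d" unfolding tset_def by blast
  define r where "r = t * real q"
  have "rvec b = rvec a + r *\<^sub>R rvec e" using b(2) by (simp add: rvec_d r_def)
  then have bj: "real_of_int (b $ j) = real_of_int (a $ j) + r * real_of_int (e $ j)" for j
    by (simp add: rvec_def vec_eq_iff)
  obtain j0 where j0: "e $ j0 \<noteq> 0"
    using primitive_vec_nonzero[OF eprim] by (auto simp: vec_eq_iff)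
  have "r = real_of_int (b $ j0 - a $ j0) / real_of_int (e $ j0)"
    using bj[of j0] j0 by (simp add: field_simps)
  then have "r \<in> \<rat>" by simp
  then obtain p s where ps: "s > 0" "coprime p s" "r = of_int p / of_int s" by (rule Rats_cases')
  have "s dvd e $ j" for j
  proof -
    have "real_of_int ((b $ j - a $ j) * s) = real_of_int (p * e $ j)"
      using bj[of j] ps by (simp add: field_simps)
    then have "s dvd p * e $ j" by (metis dvd_triv_right of_int_eq_iff)
    then show ?thesis using ps(2) by (metis coprime_commute coprime_dvd_mult_right_iff)
  qed
  then have "s = 1" using eprim ps(1) unfolding primitive_vec_def by fastforce
  then have "b = a + p *s e"
    using bj ps(3) by (simp add: vec_eq_iff rvec_def) (metis of_int_eq_iff of_int_add of_int_mult)
  then have "p \<in> line_zeros a" using b(1) by (simp add: line_zeros_def)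
  moreover have "t = real_of_int p / real q"
    using ps(3) \<open>s = 1\<close> q by (simp add: r_def[symmetric] field_simps)
  ultimately show "t \<in> (\<lambda>k. real_of_int k / real q) ` line_zeros a" by blast
qed

lemma qval_mem: "finite_val a \<Longrightarrow> qval a \<in> line_zeros a"
  unfolding finite_val_def qval_def using int_Inf_mem by blast

lemma qval_le: "finite_val a \<Longrightarrow> k \<in> line_zeros a \<Longrightarrow> qval a \<le> k"
  unfolding finite_val_def qval_def by (simp add: cInf_lower)

lemma qpval_props:
  assumes "finite_val a"
  shows "qpval a \<in> line_zeros a" "qval a \<le> qpval a" "qpval a < qval a + int q"
    "\<And>k. k \<in> line_zeros a \<Longrightarrow> k < qval a + int q \<Longrightarrow> k \<le> qpval a"
proof -
  let ?A = "{k \<in> line_zeros a. k < qval a + int q}"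
  have A: "?A \<subseteq> {qval a..<qval a + int q}" using qval_le[OF assms] by auto
  then have fA: "finite ?A" by (rule finite_subset) simp
  have "qval a \<in> ?A" using qval_mem[OF assms] q by auto
  then have "qpval a \<in> ?A" unfolding qpval_def using fA by (intro Max_in) auto
  then show "qpval a \<in> line_zeros a" "qval a \<le> qpval a" "qpval a < qval a + int q" using A by auto
  show "\<And>k. k \<in> line_zeros a \<Longrightarrow> k < qval a + int q \<Longrightarrow> k \<le> qpval a"
    unfolding qpval_def using fA by (intro Max_ge) auto
qed

lemma val_eq_qval:
  assumes "finite_val a" shows "val f d a = ereal (real_of_int (qval a) / real q)"
  unfolding val_def tset_eq_line_zeros
proof (rule Inf_eqI)
  fix i assume "i \<in> ereal ` (\<lambda>k. real_of_int k / real q) ` line_zeros a"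
  then show "ereal (real_of_int (qval a) / real q) \<le> i"
    using qval_le[OF assms] q by (auto simp: divide_right_mono)
next
  fix y assume "\<And>i. i \<in> ereal ` (\<lambda>k. real_of_int k / real q) ` line_zeros a \<Longrightarrow> y \<le> i"
  then show "y \<le> ereal (real_of_int (qval a) / real q)" using qval_mem[OF assms] by blast
qed

lemma val_eq_infinity: "line_zeros a = {} \<Longrightarrow> val f d a = \<infinity>"
  unfolding val_def tset_eq_line_zeros by (simp add: top_ereal_def)

lemma val_eq_minus_infinity:
  assumes "line_zeros a \<noteq> {}" "\<not> bdd_below (line_zeros a)" shows "val f d a = - \<infinity>"
  unfolding val_def tset_eq_line_zeros
proof (rule Inf_eqI)
  fix y assume y: "\<And>i. i \<in> ereal ` (\<lambda>k. real_of_int k / real q) ` line_zeros a \<Longrightarrow> y \<le> i"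
  show "y \<le> - \<infinity>"
  proof (cases y)
    case (real r)
    obtain k where k: "k \<in> line_zeros a" "k < \<lfloor>r * real q\<rfloor>"
      using assms(2) unfolding bdd_below_def by (meson not_le)
    then have "real_of_int k / real q < r" using q by (simp add: divide_less_eq mult_ac) linarith
    moreover have "y \<le> ereal (real_of_int k / real q)" using y k(1) by blast
    ultimately show ?thesis using real by simp
  next
    case PInf
    obtain k where "k \<in> line_zeros a" using assms(1) by blast
    then show ?thesis using y PInf by fastforce
  qed simp
qed simp

lemma abs_val_neq_infinity_iff: "\<bar>val f d a\<bar> \<noteq> \<infinity> \<longleftrightarrow> finite_val a"
  by (cases "line_zeros a = {}"; cases "bdd_below (line_zeros a)")
    (simp_all add: val_eq_qval val_eq_infinity val_eq_minus_infinity finite_val_def)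

lemma val_gt_minus_infinity_iff: "val f d a > - \<infinity> \<longleftrightarrow> line_zeros a = {} \<or> finite_val a"
  by (cases "line_zeros a = {}"; cases "bdd_below (line_zeros a)")
    (simp_all add: val_eq_qval val_eq_infinity val_eq_minus_infinity finite_val_def)

lemma pval_eq_qpval:
  assumes "finite_val a" shows "pval f d a = real_of_int (qpval a) / real q"
proof -
  let ?A = "{k \<in> line_zeros a. qval a \<le> k \<and> k < qval a + int q}"
  have qp: "real q > 0" using q by simp
  have "real_of_int k / real q < real_of_int (qval a) / real q + 1 \<longleftrightarrow> k < qval a + int q" for k
  proof -
    have "real_of_int (qval a) / real q + 1 = real_of_int (qval a + int q) / real q"
      using qp by (simp add: field_simps)
    then have "real_of_int k / real q < real_of_int (qval a) / real q + 1
        \<longleftrightarrow> real_of_int k < real_of_int (qval a + int q)"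
      using qp by (simp only: divide_less_cancel) simp
    then show ?thesis by (simp only: of_int_less_iff)
  qed
  moreover have "real_of_int (qval a) / real q \<le> real_of_int k / real q \<longleftrightarrow> qval a \<le> k" for k
    using qp by (simp add: divide_le_cancel)
  ultimately have eq: "{t \<in> tset f d a. real_of_ereal (val f d a) \<le> t \<and> t < real_of_ereal (val f d a) + 1}
        = (\<lambda>k. real_of_int k / real q) ` ?A"
    unfolding val_eq_qval[OF assms] tset_eq_line_zeros by auto
  have fA: "finite ?A" by (rule finite_subset[of _ "{qval a..<qval a + int q}"]) auto
  have ne: "?A \<noteq> {}" using qval_mem[OF assms] q by auto
  have mono: "mono (\<lambda>k. real_of_int k / real q)" using qp by (auto simp: mono_def divide_right_mono)
  have "?A = {k \<in> line_zeros a. k < qval a + int q}" using qval_le[OF assms] by auto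
  then have "Max ?A = qpval a" unfolding qpval_def by simp
  then show ?thesis unfolding pval_def eq using mono_Max_commute[OF mono fA ne] by simp
qed

lemma Vmon'_eq_vpt_image: "Vmon' f d = {vpt a | a. finite_val a}"
proof -
  have "rvec b = rvec a + pval f d a *\<^sub>R rvec d \<longleftrightarrow> b = vpt a" if "finite_val a" for a b
  proof -
    have "rvec a + pval f d a *\<^sub>R rvec d = rvec (vpt a)"
      using q by (simp add: pval_eq_qpval[OF that] rvec_d vpt_def rvec_add rvec_smult)
    then show ?thesis by (simp add: rvec_eq_iff)
  qed
  then show ?thesis unfolding Vmon'_def abs_val_neq_infinity_iff by auto
qed

lemma finite_val_shift: "finite_val (a + m *s e) \<longleftrightarrow> finite_val a"
proof -
  have "line_zeros (a + m *s e) = (\<lambda>k. k - m) ` line_zeros a"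
    by (auto simp: line_zeros_shift image_iff intro!: bexI[where x="_ + m"])
  moreover have "bdd_below ((\<lambda>k. k - m) ` X) \<longleftrightarrow> bdd_below X" for X :: "int set"
  proof
    assume "bdd_below ((\<lambda>k. k - m) ` X)"
    from bdd_below_image_mono[OF _ this, of "\<lambda>k. k + m"] show "bdd_below X"
      by (simp add: image_image mono_def)
  next
    assume "bdd_below X"
    from bdd_below_image_mono[OF _ this, of "\<lambda>k. k - m"] show "bdd_below ((\<lambda>k. k - m) ` X)"
      by (simp add: mono_def)
  qed
  ultimately show ?thesis by (simp add: finite_val_def)
qed

lemma qval_shift: assumes "finite_val a" shows "qval (a + m *s e) = qval a - m"
proof -
  have f: "finite_val (a + m *s e)" using finite_val_shift assms by blast
  have "qval a \<le> qval (a + m *s e) + m"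
    using qval_le[OF assms] qval_mem[OF f] line_zeros_shift by blast
  moreover have "qval (a + m *s e) \<le> qval a - m"
    using qval_le[OF f] qval_mem[OF assms] line_zeros_shift by simp
  ultimately show ?thesis by simp
qed

lemma qpval_shift: assumes "finite_val a" shows "qpval (a + m *s e) = qpval a - m"
proof -
  have f: "finite_val (a + m *s e)" using finite_val_shift assms by blast
  have qv: "qval (a + m *s e) = qval a - m" by (rule qval_shift[OF assms])
  have "qpval (a + m *s e) + m \<le> qpval a"
    using qpval_props(1,3)[OF f] qpval_props(4)[OF assms] line_zeros_shift qv by simp
  moreover have "qpval a - m \<le> qpval (a + m *s e)"
    using qpval_props(1,3)[OF assms] qpval_props(4)[OF f] line_zeros_shift qv by simp
  ultimately show ?thesis by simp
qed

lemma vpt_shift: "finite_val a \<Longrightarrow> vpt (a + m *s e) = vpt a"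
  by (simp add: vpt_def qpval_shift vec_eq_iff algebra_simps)

lemma vpt_idem: assumes "finite_val a" shows "vpt (vpt a) = vpt a"
proof -
  have "vpt (a + qpval a *s e) = vpt a" by (rule vpt_shift[OF assms])
  then show ?thesis unfolding vpt_def[of a] .
qed

lemma hint_d_eq: "hint (c i) d = int q * hint (c i) e"
  by (simp add: d_eq hint_smult)

lemma hint_d_eq_0_iff: "hint (c i) d = 0 \<longleftrightarrow> hint (c i) e = 0"
  using q by (simp add: hint_d_eq)

lemma hint_line: "hint (c i) (a + k *s e) = hint (c i) a - k * hint (c i) (- e)"
  by (simp add: hint_add hint_smult hint_uminus)

lemma neg_e_in_semigp: "- e \<in> semigp \<sigma>"
proof -
  have "int q * hint (c i) (- e) \<ge> 0" if "i < n" for i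
    using dS that semigp_iff by (simp add: hint_uminus hint_d_eq)
  then show ?thesis using q by (simp add: semigp_iff zero_le_mult_iff)
qed

lemma neg_smult_e_in_semigp: "0 \<le> j \<Longrightarrow> (- j) *s e \<in> semigp \<sigma>"
  using semigp_smult[OF neg_e_in_semigp, of j] by (simp add: vector_smult_lneg)

lemma hint_neg_e_nonneg: "i < n \<Longrightarrow> hint (c i) (- e) \<ge> 0"
  using neg_e_in_semigp semigp_iff by blast

lemma exists_facet_neg_e_pos: "\<exists>i<n. hint (c i) (- e) > 0"
proof -
  obtain i where "i < n" "hint (c i) d < 0" using exists_facet_neg[OF dnz dS] by blast
  then show ?thesis using q by (auto simp: hint_d_eq hint_uminus mult_less_0_iff)
qed

lemma mem_Vmon_of_facet_band:
  assumes "i < n" "0 \<le> hint (c i) p" "hint (c i) p \<le> int q * hint (c i) (- e) - 1"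
  shows "p \<in> Vmon f"
proof -
  have "peval (Hpoly n c d) p = 0"
    using assms by (intro peval_Hpoly_eq_0[OF assms(1)]) (auto simp: hint_uminus hint_d_eq)
  then show ?thesis using peval_dvd_eq_0[OF hdiv] by (simp add: Vmon_def)
qed

text \<open>Along \<open>a + \<int>e\<close> the facet function \<open>h\<^sub>i\<close> moves in steps of \<open>h = h\<^sub>i(-e)\<close>, so the band
  \<open>0 \<le> h\<^sub>i \<le> qh - 1\<close> on which \<open>f\<close> vanishes contains \<open>q\<close> consecutive points of the line.\<close>

lemma line_zeros_band:
  assumes i: "i < n" and h: "hint (c i) (- e) > 0" and j: "0 \<le> j" "j < int q"
  shows "hint (c i) a div hint (c i) (- e) - j \<in> line_zeros a"
proof -
  define h where "h = hint (c i) (- e)"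
  define k where "k = hint (c i) a div h - j"
  have hk: "hint (c i) (a + k *s e) = hint (c i) a mod h + j * h"
    unfolding hint_line h_def[symmetric] k_def by (simp add: minus_div_mult_eq_mod algebra_simps)
  have "0 \<le> hint (c i) a mod h" "hint (c i) a mod h < h" "0 \<le> j * h"
    using h j by (simp_all add: h_def)
  moreover have "(j + 1) * h \<le> int q * h" using h j h_def by (intro mult_right_mono) auto
  ultimately have "0 \<le> hint (c i) (a + k *s e)" "hint (c i) (a + k *s e) \<le> int q * h - 1"
    unfolding hk by (simp_all add: algebra_simps)
  then have "a + k *s e \<in> Vmon f" using mem_Vmon_of_facet_band[OF i] h_def by blast
  then show ?thesis unfolding line_zeros_def k_def h_def by simp
qed

lemma line_zeros_nonempty: "line_zeros a \<noteq> {}"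
  using exists_facet_neg_e_pos line_zeros_band[of _ 0] q by fastforce

lemma vpt_in_semigp:
  assumes "a \<in> semigp \<sigma>" "finite_val a"
  shows "vpt a \<in> semigp \<sigma>"
  unfolding semigp_iff
proof (intro allI impI)
  fix i assume i: "i < n"
  define h where "h = hint (c i) (- e)"
  show "0 \<le> hint (c i) (vpt a)"
  proof (cases "h = 0")
    case True
    then show ?thesis using assms(1) i semigp_iff by (simp add: vpt_def hint_line h_def)
  next
    case False
    then have h: "h > 0" using hint_neg_e_nonneg[OF i] h_def by simp
    define k0 where "k0 = hint (c i) a div h"
    have "k0 - (int q - 1) \<in> line_zeros a"
      using line_zeros_band[OF i, of "int q - 1" a] h q unfolding k0_def h_def by simp
    then have "qval a \<le> k0 - (int q - 1)" by (rule qval_le[OF assms(2)])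
    then have "qpval a \<le> k0" using qpval_props(3)[OF assms(2)] by simp
    then have "qpval a * h \<le> k0 * h" using h by (simp add: mult_right_mono)
    moreover have "hint (c i) a - k0 * h = hint (c i) a mod h"
      unfolding k0_def by (rule minus_div_mult_eq_mod)
    moreover have "hint (c i) a mod h \<ge> 0" using h by simp
    moreover have "hint (c i) (vpt a) = hint (c i) a - qpval a * h"
      by (simp only: vpt_def hint_line h_def)
    ultimately show ?thesis by linarith
  qed
qed

definition admissible :: "(nat \<Rightarrow> nat) set \<Rightarrow> bool" where
  "admissible B \<longleftrightarrow> compatible n c d B
     \<and> (\<forall>a\<in>Wset \<sigma> n c B. val f d a > -\<infinity>)
     \<and> (\<forall>a\<in>Vmon' f d \<inter> Wset \<sigma> n c B. \<forall>i<q. a - of_int (int i) *s e \<in> Vmon f)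
     \<and> (\<forall>a\<in>Vmon' f d \<inter> Wset \<sigma> n c B. \<forall>b\<in>Vmon' f d \<inter> Wset \<sigma> n c B.
          a - b \<notin> (\<lambda>s. s - e) ` semigp \<sigma>)"

section \<open>A fixed monomial ideal yields an admissible family\<close>

definition flat_levels :: "int^'n \<Rightarrow> nat \<Rightarrow> nat" where
  "flat_levels a i = (if i < n \<and> hint (c i) d = 0 then nat (hint (c i) a) else 0)"

context
  fixes E assumes E: "exp_ideal \<sigma> E" and fixed: "delta_exps f d E = E"
begin

lemma E_subset_semigp: "E \<subseteq> semigp \<sigma>"
  using E by (simp add: exp_ideal_def)

lemma E_down: "a \<in> E \<Longrightarrow> 0 \<le> j \<Longrightarrow> a + (- j) *s e \<in> E"
  using E neg_smult_e_in_semigp unfolding exp_ideal_def by blast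

lemma mem_E_iff: "a \<in> E \<longleftrightarrow> a - d \<in> E \<and> a - d \<notin> Vmon f"
  using fixed mem_delta_exps_iff by blast

text \<open>If \<open>f\<close> did not vanish at \<open>a + ke\<close> for some \<open>1 - q \<le> k \<le> 0\<close>, invariance would put
  \<open>a + (k + q)e\<close>, and with it \<open>a + e\<close>, into \<open>E\<close>; below that run, invariance keeps \<open>f\<close> nonzero.\<close>

lemma E_top_line_zeros:
  assumes a: "a \<in> E" "a + e \<notin> E"
  shows "{1 - int q..0} \<subseteq> line_zeros a" "line_zeros a \<subseteq> {1 - int q..}"
proof
  fix k assume k: "k \<in> {1 - int q..0}"
  show "k \<in> line_zeros a"
  proof (rule ccontr)
    assume "k \<notin> line_zeros a"
    moreover have "a + k *s e \<in> E" using E_down[OF a(1), of "- k"] k by simp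
    ultimately have "a + k *s e + d \<in> E" using mem_E_iff[of "a + k *s e + d"] by (simp add: line_zeros_def)
    then have "a + k *s e + d + (- (int q + k - 1)) *s e \<in> E" using k by (intro E_down) auto
    moreover have "a + k *s e + d + (- (int q + k - 1)) *s e = a + e"
      by (simp add: d_eq vec_eq_iff algebra_simps)
    ultimately show False using a(2) by simp
  qed
next
  show "line_zeros a \<subseteq> {1 - int q..}"
  proof
    fix k assume k: "k \<in> line_zeros a"
    show "k \<in> {1 - int q..}"
    proof (rule ccontr)
      assume "k \<notin> {1 - int q..}"
      then have "a + (- (- k - int q)) *s e \<in> E" by (intro E_down[OF a(1)]) auto
      moreover have "a + (- (- k - int q)) *s e - d = a + k *s e"
        by (simp add: d_eq vec_eq_iff algebra_simps)
      ultimately show False using k mem_E_iff[of "a + (- (- k - int q)) *s e"] by (simp add: line_zeros_def)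
    qed
  qed
qed

lemma E_top_props:
  assumes a: "a \<in> E" "a + e \<notin> E"
  shows "finite_val a" "vpt a = a" "\<And>j. 0 \<le> j \<Longrightarrow> j < int q \<Longrightarrow> a + (- j) *s e \<in> Vmon f"
proof -
  note Z = E_top_line_zeros[OF a]
  have "0 \<in> line_zeros a" using Z(1) q by auto
  moreover have "bdd_below (line_zeros a)" using Z(2) by (auto intro: bdd_belowI[of _ "1 - int q"])
  ultimately show fa: "finite_val a" unfolding finite_val_def by blast
  have "1 - int q \<in> line_zeros a" using Z(1) q by auto
  then have "qval a \<le> 1 - int q" by (rule qval_le[OF fa])
  moreover have "1 - int q \<le> qval a" using qval_mem[OF fa] Z(2) by auto
  ultimately have "qval a = 1 - int q" by simp
  then have "qpval a = 0"
    using qpval_props(3)[OF fa] qpval_props(4)[OF fa, of 0] \<open>0 \<in> line_zeros a\<close> by simp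
  then show "vpt a = a" by (simp add: vpt_def)
  show "a + (- j) *s e \<in> Vmon f" if "0 \<le> j" "j < int q" for j
    using subsetD[OF Z(1), of "- j"] that by (simp add: line_zeros_def)
qed

lemma E_line_vpt:
  assumes "x + m *s e \<in> E"
  shows "finite_val x" "vpt x \<in> E" "vpt x + e \<notin> E"
    "\<And>j. 0 \<le> j \<Longrightarrow> j < int q \<Longrightarrow> vpt x + (- j) *s e \<in> Vmon f"
proof -
  obtain i0 where i0: "i0 < n" "hint (c i0) (- e) > 0" using exists_facet_neg_e_pos by blast
  let ?K = "{k. x + k *s e \<in> E}"
  have "k \<le> \<bar>hint (c i0) x\<bar>" if "k \<in> ?K" for k
  proof -
    have "k * hint (c i0) (- e) \<le> hint (c i0) x"
      using that E_subset_semigp semigp_iff i0(1) hint_line[of i0 x k] by force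
    moreover have "k \<le> k * hint (c i0) (- e)" if "k \<ge> 0"
      using i0(2) that mult_left_mono[of 1 "hint (c i0) (- e)" k] by simp
    ultimately show ?thesis by (cases "k \<ge> 0") auto
  qed
  then have bdd: "bdd_above ?K" by (rule bdd_aboveI)
  have "Sup ?K \<in> ?K" using assms int_Sup_mem[OF _ bdd] by blast
  moreover have "Sup ?K + 1 \<notin> ?K" using cSup_upper[OF _ bdd, of "Sup ?K + 1"] by linarith
  moreover have "x + Sup ?K *s e + e = x + (Sup ?K + 1) *s e" by (simp add: vec_eq_iff algebra_simps)
  ultimately have top: "x + Sup ?K *s e \<in> E" "x + Sup ?K *s e + e \<notin> E" by (metis mem_Collect_eq)+
  note tp = E_top_props[OF top]
  have xa: "x = x + Sup ?K *s e + (- Sup ?K) *s e" by (simp add: vec_eq_iff)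
  show "finite_val x" using tp(1) finite_val_shift xa by metis
  have "vpt x = x + Sup ?K *s e" using vpt_shift[OF tp(1), of "- Sup ?K"] xa tp(2) by simp
  then show "vpt x \<in> E" "vpt x + e \<notin> E"
    "\<And>j. 0 \<le> j \<Longrightarrow> j < int q \<Longrightarrow> vpt x + (- j) *s e \<in> Vmon f"
    using top tp(3) by auto
qed

lemma E_line_of_flat_dominance:
  assumes a: "a \<in> E" and x: "x \<in> semigp \<sigma>"
    and flat: "\<And>i. i < n \<Longrightarrow> hint (c i) d = 0 \<Longrightarrow> hint (c i) a \<le> hint (c i) x"
  shows "\<exists>m. x + m *s e \<in> E"
proof -
  define j where "j = (\<Sum>i<n. \<bar>hint (c i) (x - a)\<bar>)"
  have "x + (- j) *s e - a \<in> semigp \<sigma>"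
    unfolding semigp_iff
  proof (intro allI impI)
    fix i assume i: "i < n"
    have hz: "hint (c i) (x + (- j) *s e - a) = hint (c i) (x - a) + j * hint (c i) (- e)"
      by (simp add: hint_diff hint_add hint_smult hint_uminus)
    show "0 \<le> hint (c i) (x + (- j) *s e - a)"
    proof (cases "hint (c i) d = 0")
      case True
      then show ?thesis using hz flat[OF i] by (simp add: hint_diff hint_uminus hint_d_eq_0_iff)
    next
      case False
      then have "hint (c i) (- e) \<ge> 1"
        using hint_neg_e_nonneg[OF i] by (simp add: hint_uminus hint_d_eq_0_iff)
      then have "j \<le> j * hint (c i) (- e)"
        using mult_left_mono[of 1 "hint (c i) (- e)" j] by (simp add: j_def sum_nonneg)
      moreover have "\<bar>hint (c i) (x - a)\<bar> \<le> j" unfolding j_def using i by (intro member_le_sum) auto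
      ultimately show ?thesis using hz by linarith
    qed
  qed
  then have "a + (x + (- j) *s e - a) \<in> E" using E a unfolding exp_ideal_def by blast
  then show ?thesis by (metis add.commute diff_add_cancel)
qed

lemma Wset_flat_levels: "Wset \<sigma> n c (flat_levels ` E) = {x \<in> semigp \<sigma>. \<exists>m. x + m *s e \<in> E}"
proof (intro equalityI subsetI)
  fix x assume "x \<in> Wset \<sigma> n c (flat_levels ` E)"
  then obtain a where a: "a \<in> E" "x \<in> semigp \<sigma>" "\<forall>i<n. hint (c i) x \<ge> int (flat_levels a i)"
    unfolding Wset_def by blast
  have "hint (c i) a \<le> hint (c i) x" if "i < n" "hint (c i) d = 0" for i
    using a(3) that facet_functions_nonneg[OF facets that(1)] E_subset_semigp a(1)
    by (force simp: flat_levels_def)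
  then show "x \<in> {x \<in> semigp \<sigma>. \<exists>m. x + m *s e \<in> E}"
    using E_line_of_flat_dominance[OF a(1,2)] a(2) by blast
next
  fix x assume "x \<in> {x \<in> semigp \<sigma>. \<exists>m. x + m *s e \<in> E}"
  then obtain m where x: "x \<in> semigp \<sigma>" "x + m *s e \<in> E" by blast
  have "int (flat_levels (x + m *s e) i) \<le> hint (c i) x" if i: "i < n" for i
    using facet_functions_nonneg[OF facets i x(1)]
    by (auto simp: flat_levels_def hint_add hint_smult hint_d_eq_0_iff)
  then show "x \<in> Wset \<sigma> n c (flat_levels ` E)" unfolding Wset_def using x by blast
qed

lemma Vmon'_Wset_flat_levels:
  assumes "b \<in> Vmon' f d \<inter> Wset \<sigma> n c (flat_levels ` E)"
  shows "b \<in> E" "b + e \<notin> E" "\<And>j. 0 \<le> j \<Longrightarrow> j < int q \<Longrightarrow> b + (- j) *s e \<in> Vmon f"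
proof -
  obtain y where "finite_val y" "b = vpt y" using assms Vmon'_eq_vpt_image by blast
  then have vb: "vpt b = b" by (simp add: vpt_idem)
  obtain m where "b + m *s e \<in> E" using assms Wset_flat_levels by blast
  from E_line_vpt[OF this] show "b \<in> E" "b + e \<notin> E"
    "\<And>j. 0 \<le> j \<Longrightarrow> j < int q \<Longrightarrow> b + (- j) *s e \<in> Vmon f"
    unfolding vb by blast+
qed

lemma admissible_flat_levels: "admissible (flat_levels ` E)"
  unfolding admissible_def
proof (intro conjI ballI allI impI)
  show "compatible n c d (flat_levels ` E)" by (simp add: compatible_def flat_levels_def)
next
  fix a assume "a \<in> Wset \<sigma> n c (flat_levels ` E)"
  then obtain m where "a + m *s e \<in> E" using Wset_flat_levels by blast
  then show "val f d a > - \<infinity>" using E_line_vpt(1) val_gt_minus_infinity_iff by blast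
next
  fix a i assume a: "a \<in> Vmon' f d \<inter> Wset \<sigma> n c (flat_levels ` E)" and "i < q"
  then have "a + (- int i) *s e \<in> Vmon f" using Vmon'_Wset_flat_levels(3) by simp
  then show "a - of_int (int i) *s e \<in> Vmon f" by (simp add: vector_smult_lneg)
next
  fix a b assume a: "a \<in> Vmon' f d \<inter> Wset \<sigma> n c (flat_levels ` E)"
    and b: "b \<in> Vmon' f d \<inter> Wset \<sigma> n c (flat_levels ` E)"
  show "a - b \<notin> (\<lambda>s. s - e) ` semigp \<sigma>"
  proof
    assume "a - b \<in> (\<lambda>s. s - e) ` semigp \<sigma>"
    then obtain s where s: "s \<in> semigp \<sigma>" "a + e = b + s" by (force simp: algebra_simps)
    then have "a + e \<in> E" using Vmon'_Wset_flat_levels(1)[OF b] E unfolding exp_ideal_def by simp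
    then show False using Vmon'_Wset_flat_levels(2)[OF a] by simp
  qed
qed

end

section \<open>An admissible family yields a fixed monomial ideal\<close>

context
  fixes B :: "(nat \<Rightarrow> nat) set"
  assumes adm: "admissible B"
begin

abbreviation W :: "(int^'n) set" where "W \<equiv> Wset \<sigma> n c B"

lemma compatible_B: "compatible n c d B"
  and val_W: "\<And>a. a \<in> W \<Longrightarrow> val f d a > - \<infinity>"
  and zeros_below_Vmon'_W: "\<And>a i. a \<in> Vmon' f d \<inter> W \<Longrightarrow> i < q \<Longrightarrow> a - of_int (int i) *s e \<in> Vmon f"
  and diff_Vmon'_W: "\<And>a b. a \<in> Vmon' f d \<inter> W \<Longrightarrow> b \<in> Vmon' f d \<inter> W \<Longrightarrow> a - b \<notin> (\<lambda>s. s - e) ` semigp \<sigma>"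
  using adm unfolding admissible_def by blast+

lemma W_subset_semigp: "W \<subseteq> semigp \<sigma>"
  unfolding Wset_def by blast

lemma W_add: assumes "x \<in> W" "s \<in> semigp \<sigma>" shows "x + s \<in> W"
proof -
  obtain \<beta> where b: "\<beta> \<in> B" "x \<in> semigp \<sigma>" "\<forall>i<n. hint (c i) x \<ge> int (\<beta> i)"
    using assms(1) unfolding Wset_def by blast
  have "hint (c i) (x + s) \<ge> int (\<beta> i)" if "i < n" for i
    using b(3)[rule_format, OF that] facet_functions_nonneg[OF facets that assms(2)] by (simp add: hint_add)
  then show ?thesis using b(1,2) assms(2) semigp_add unfolding Wset_def by blast
qed

text \<open>Compatibility: the facets bounding a \<open>W\<^sub>\<beta>\<close> from below are parallel to \<open>d\<close>.\<close>

lemma W_line: assumes "x \<in> W" "x + m *s e \<in> semigp \<sigma>" shows "x + m *s e \<in> W"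
proof -
  obtain \<beta> where b: "\<beta> \<in> B" "\<forall>i<n. hint (c i) x \<ge> int (\<beta> i)"
    using assms(1) unfolding Wset_def by blast
  have "hint (c i) (x + m *s e) \<ge> int (\<beta> i)" if i: "i < n" for i
  proof (cases "\<beta> i = 0")
    case True then show ?thesis using facet_functions_nonneg[OF facets i assms(2)] by simp
  next
    case False
    then have "hint (c i) d = 0" using compatible_B b(1) i unfolding compatible_def by fastforce
    then have "hint (c i) e = 0" by (simp add: hint_d_eq_0_iff)
    then show ?thesis using b(2)[rule_format, OF i] by (simp add: hint_add hint_smult)
  qed
  then show ?thesis using b(1) assms(2) unfolding Wset_def by blast
qed

lemma W_finite_val: "x \<in> W \<Longrightarrow> finite_val x"
  by (metis val_W val_gt_minus_infinity_iff line_zeros_nonempty)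

lemma vpt_in_Vmon'_W: assumes "x \<in> W" shows "vpt x \<in> Vmon' f d \<inter> W"
proof -
  have fx: "finite_val x" by (rule W_finite_val[OF assms])
  have "vpt x \<in> semigp \<sigma>" using vpt_in_semigp[OF _ fx] W_subset_semigp assms by blast
  then have "vpt x \<in> W" using W_line[OF assms] by (simp add: vpt_def)
  then show ?thesis unfolding Vmon'_eq_vpt_image using fx by blast
qed

definition fixed_exps :: "(int^'n) set" where
  "fixed_exps = {a \<in> W. finite_val a \<and> qpval a \<ge> 0}"

lemma exp_hull_Vmon'_W: "exp_hull \<sigma> (Vmon' f d \<inter> W) = fixed_exps"
proof (intro equalityI subsetI)
  fix a assume "a \<in> exp_hull \<sigma> (Vmon' f d \<inter> W)"
  then obtain b s where bs: "a = b + s" "b \<in> Vmon' f d \<inter> W" "s \<in> semigp \<sigma>"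
    unfolding exp_hull_def by blast
  have aW: "a \<in> W" using W_add[of b s] bs by blast
  have "qpval a \<ge> 0"
  proof (rule ccontr)
    assume "\<not> qpval a \<ge> 0"
    then have "- qpval a - 1 \<ge> 0" by simp
    then have "s + (- qpval a - 1) *s (- e) \<in> semigp \<sigma>"
      using semigp_add[OF bs(3) semigp_smult[OF neg_e_in_semigp]] by blast
    moreover have "vpt a - b = (s + (- qpval a - 1) *s (- e)) - e"
      using bs(1) by (simp add: vpt_def vec_eq_iff algebra_simps)
    ultimately have "vpt a - b \<in> (\<lambda>s. s - e) ` semigp \<sigma>" by blast
    then show False using diff_Vmon'_W[OF vpt_in_Vmon'_W[OF aW] bs(2)] by blast
  qed
  then show "a \<in> fixed_exps" using aW W_finite_val by (simp add: fixed_exps_def)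
next
  fix a assume "a \<in> fixed_exps"
  then have a: "a \<in> W" "qpval a \<ge> 0" by (auto simp: fixed_exps_def)
  have "a = vpt a + qpval a *s (- e)" by (simp add: vpt_def vec_eq_iff)
  then show "a \<in> exp_hull \<sigma> (Vmon' f d \<inter> W)"
    using vpt_in_Vmon'_W[OF a(1)] semigp_smult[OF neg_e_in_semigp a(2)]
    unfolding exp_hull_def by blast
qed

lemma fixed_exps_subset_semigp: "fixed_exps \<subseteq> semigp \<sigma>"
  using W_subset_semigp by (auto simp: fixed_exps_def)

text \<open>By admissibility each \<open>vpt a\<close> tops a run of \<open>q\<close> zeros of \<open>f\<close>, so a point of \<open>fixed_exps\<close>
  where \<open>f\<close> does not vanish lies at least \<open>q\<close> steps below its \<open>vpt\<close>, and adding \<open>d\<close> keeps it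
  in \<open>fixed_exps\<close>.\<close>

lemma delta_exps_fixed_exps: "delta_exps f d fixed_exps = fixed_exps"
proof (intro equalityI subsetI)
  fix x assume "x \<in> delta_exps f d fixed_exps"
  then have x: "x - d \<in> fixed_exps" "x - d \<notin> Vmon f" using mem_delta_exps_iff by blast+
  define a where "a = x - d"
  have a: "a \<in> W" "finite_val a" "qpval a \<ge> 0" "a \<notin> Vmon f" using x by (auto simp: fixed_exps_def a_def)
  have "qpval a \<ge> int q"
  proof (rule ccontr)
    assume "\<not> qpval a \<ge> int q"
    then have "nat (qpval a) < q" using a(3) by simp
    then have "vpt a - of_int (int (nat (qpval a))) *s e \<in> Vmon f"
      by (rule zeros_below_Vmon'_W[OF vpt_in_Vmon'_W[OF a(1)]])
    then show False using a(3,4) by (simp add: vpt_def)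
  qed
  have xa: "x = a + int q *s e" by (simp add: a_def d_eq)
  have "x = vpt a + (qpval a - int q) *s (- e)" by (simp add: xa vpt_def vec_eq_iff algebra_simps)
  moreover have "vpt a \<in> semigp \<sigma>" using vpt_in_Vmon'_W[OF a(1)] W_subset_semigp by blast
  moreover have "(qpval a - int q) *s (- e) \<in> semigp \<sigma>"
    using \<open>qpval a \<ge> int q\<close> by (intro semigp_smult[OF neg_e_in_semigp]) simp
  ultimately have "x \<in> semigp \<sigma>" using semigp_add by simp
  then have "x \<in> W" using W_line[OF a(1)] xa by simp
  moreover have "finite_val x" "qpval x \<ge> 0"
    using finite_val_shift qpval_shift[OF a(2)] a(2) \<open>qpval a \<ge> int q\<close> xa by simp_all
  ultimately show "x \<in> fixed_exps" by (simp add: fixed_exps_def)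
next
  fix a assume "a \<in> fixed_exps"
  then have a: "a \<in> W" "finite_val a" "qpval a \<ge> 0" by (auto simp: fixed_exps_def)
  have bd: "a - d = a + (- int q) *s e" by (simp add: d_eq vec_eq_iff)
  have "a - d \<in> W" unfolding bd by (rule W_add[OF a(1) neg_smult_e_in_semigp]) simp
  moreover have "finite_val (a - d)" "qpval (a - d) \<ge> 0"
    unfolding bd using finite_val_shift qpval_shift[OF a(2), of "- int q"] a(2,3) by simp_all
  moreover have "a - d \<notin> Vmon f"
  proof
    assume "a - d \<in> Vmon f"
    then have "qval a \<le> - int q" using qval_le[OF a(2)] bd by (simp add: line_zeros_def)
    then show False using qpval_props(3)[OF a(2)] a(3) by simp
  qed
  ultimately show "a \<in> delta_exps f d fixed_exps" by (simp add: mem_delta_exps_iff fixed_exps_def)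
qed

lemma fixed_exps_eq: "fixed_exps = {a \<in> W. \<bar>val f d a\<bar> \<noteq> \<infinity> \<and> pval f d a \<ge> 0}"
  unfolding fixed_exps_def abs_val_neq_infinity_iff
  using pval_eq_qpval q by (auto simp: zero_le_divide_iff)

lemma fixed_exps_nonempty: assumes "B \<noteq> {}" shows "fixed_exps \<noteq> {}"
proof -
  obtain \<beta> where b: "\<beta> \<in> B" using assms by blast
  obtain p where p: "p \<in> semigp \<sigma>" "\<forall>i<n. hint (c i) p \<ge> 1" using semigp_interior_point by blast
  define M where "M = (\<Sum>i<n. \<beta> i)"
  have "hint (c i) (int M *s p) \<ge> int (\<beta> i)" if i: "i < n" for i
  proof -
    have "\<beta> i \<le> M" unfolding M_def using i by (intro member_le_sum) auto
    moreover have "int M \<le> int M * hint (c i) p" using p(2) i mult_left_mono[of 1 _ "int M"] by simp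
    ultimately show ?thesis by (simp add: hint_smult)
  qed
  then have "int M *s p \<in> W" using b semigp_smult[OF p(1)] unfolding Wset_def by auto
  then have "vpt (int M *s p) \<in> exp_hull \<sigma> (Vmon' f d \<inter> W)"
    using vpt_in_Vmon'_W unfolding exp_hull_def by (metis (mono_tags, lifting) CollectI add_0_right semigp_zero)
  then show ?thesis using exp_hull_Vmon'_W by auto
qed

end

theorem fixed_monomial_ideal_iff_admissible:
  "(\<exists>I. monomial_ideal \<sigma> I \<and> I \<noteq> {0} \<and> delta f d ` I = I) \<longleftrightarrow> (\<exists>B. B \<noteq> {} \<and> admissible B)"
proof
  assume "\<exists>I. monomial_ideal \<sigma> I \<and> I \<noteq> {0} \<and> delta f d ` I = I"
  then obtain I where I: "monomial_ideal \<sigma> I" "I \<noteq> {0}" "delta f d ` I = I" by blast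
  define E where "E = Exps \<sigma> I"
  have E: "exp_ideal \<sigma> E" and IE: "I = polys_on E"
    using monomial_ideal_eq_polys_on[OF I(1)] by (simp_all add: E_def)
  have "delta_exps f d E = E"
    using I(3) polys_on_inject unfolding IE delta_image_polys_on by blast
  moreover have "E \<noteq> {}" using I(2) polys_on_eq_zero_iff IE by blast
  ultimately show "\<exists>B. B \<noteq> {} \<and> admissible B" using admissible_flat_levels[OF E] by (metis image_is_empty)
next
  assume "\<exists>B. B \<noteq> {} \<and> admissible B"
  then obtain B where B: "B \<noteq> {}" "admissible B" by blast
  have "exp_ideal \<sigma> (fixed_exps B)"
    using exp_ideal_exp_hull W_subset_semigp[OF B(2)] exp_hull_Vmon'_W[OF B(2)] by (metis inf.coboundedI2)
  moreover have "delta f d ` polys_on (fixed_exps B) = polys_on (fixed_exps B)"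
    by (simp add: delta_image_polys_on delta_exps_fixed_exps[OF B(2)])
  moreover have "polys_on (fixed_exps B) \<noteq> {0}"
    using fixed_exps_nonempty[OF B(2,1)] polys_on_eq_zero_iff by blast
  ultimately show "\<exists>I. monomial_ideal \<sigma> I \<and> I \<noteq> {0} \<and> delta f d ` I = I"
    using monomial_ideal_polys_on by blast
qed

theorem admissible_fixed_ideal:
  assumes "admissible B"
  shows "let I = ideal_gen \<sigma> (monom ` (Vmon' f d \<inter> Wset \<sigma> n c B)) in
           delta f d ` I = I
           \<and> Exps \<sigma> I = {a \<in> Wset \<sigma> n c B. \<bar>val f d a\<bar> \<noteq> \<infinity> \<and> pval f d a \<ge> 0}"
proof -
  have "ideal_gen \<sigma> (monom ` (Vmon' f d \<inter> Wset \<sigma> n c B)) = polys_on (fixed_exps B)"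
    using ideal_gen_monom_eq W_subset_semigp[OF assms] exp_hull_Vmon'_W[OF assms]
    by (metis inf.coboundedI2)
  then show ?thesis
    using delta_exps_fixed_exps[OF assms] Exps_polys_on[OF fixed_exps_subset_semigp[OF assms]]
    by (simp add: Let_def delta_image_polys_on fixed_exps_eq[OF assms])
qed

end

theorem mainTheorem9:
  fixes \<sigma> :: "(real^'n::finite) set" and n :: nat and c :: "nat \<Rightarrow> int^'n"
    and f :: "'n cpoly" and d e :: "int^'n" and q :: nat
  assumes cone: "rat_poly_cone \<sigma>" and fulldim: "interior \<sigma> \<noteq> {}"
    and strong: "strongly_convex \<sigma>"
    and facets: "facet_functions \<sigma> n c"
    and hdiv: "Hpoly n c d dvd f"
    and dnz: "d \<noteq> 0" and dS: "- d \<in> semigp \<sigma>"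
    and q: "q \<ge> 1" and eprim: "primitive_vec e" and dqe: "d = (\<chi> j. int q * e $ j)"
  shows
    "((\<exists>I. monomial_ideal \<sigma> I \<and> I \<noteq> {0} \<and> delta f d ` I = I) \<longleftrightarrow>
       (\<exists>B. B \<noteq> {} \<and> compatible n c d B
          \<and> (\<forall>a\<in>Wset \<sigma> n c B. val f d a > -\<infinity>)
          \<and> (\<forall>a\<in>Vmon' f d \<inter> Wset \<sigma> n c B. \<forall>i<q. a - of_int (int i) *s e \<in> Vmon f)
          \<and> (\<forall>a\<in>Vmon' f d \<inter> Wset \<sigma> n c B. \<forall>b\<in>Vmon' f d \<inter> Wset \<sigma> n c B.
                a - b \<notin> (\<lambda>s. s - e) ` semigp \<sigma>)))
     \<and> (\<forall>B. compatible n c d B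
          \<and> (\<forall>a\<in>Wset \<sigma> n c B. val f d a > -\<infinity>)
          \<and> (\<forall>a\<in>Vmon' f d \<inter> Wset \<sigma> n c B. \<forall>i<q. a - of_int (int i) *s e \<in> Vmon f)
          \<and> (\<forall>a\<in>Vmon' f d \<inter> Wset \<sigma> n c B. \<forall>b\<in>Vmon' f d \<inter> Wset \<sigma> n c B.
                a - b \<notin> (\<lambda>s. s - e) ` semigp \<sigma>)
        \<longrightarrow> (let I = ideal_gen \<sigma> (monom ` (Vmon' f d \<inter> Wset \<sigma> n c B)) in
              delta f d ` I = I
              \<and> Exps \<sigma> I = {a \<in> Wset \<sigma> n c B. \<bar>val f d a\<bar> \<noteq> \<infinity> \<and> pval f d a \<ge> 0}))"
proof -
  interpret M: main_setup \<sigma> n c f d e q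
    by unfold_locales (fact assms)+
  show ?thesis
    using M.fixed_monomial_ideal_iff_admissible M.admissible_fixed_ideal
    unfolding M.admissible_def by blast
qed

end
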